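(* Let $\Gamma_n$ ($n\in\mathbb N$) be a sequence of nonatomic routing games on a fixed graph with fixed OD pairs $\mathcal I$, path sets $\mathcal P^i$ and edge costs $(c_e)_{e\in\mathcal E}$, where in $\Gamma_n$ OD pair $i$ has demand $m_n^i\ge 0$ and total inflow $M_n=\sum_i m_n^i>0$, with $M_n\to\omega\in\{0,\infty\}$. Let $c$ be a benchmark for $(c_e)$ at $\omega$ and suppose every OD pair is tight relative to $c$, i.e. $0<\alpha^i<\infty$ for all $i$, where $\alpha^i=\min_{p\in\mathcal P^i}\max_{e\in p}\alpha_e$ and $\alpha_e=\lim_{x\to\omega}c_e(x)/c(x)$. Then $\mathrm{PoA}(\Gamma_n)\to 1$.
   Context: A nonatomic routing game consists of: a finite directed multigraph with edge set $\mathcal E$; a finite set $\mathcal I$ of OD pairs, each $i$ with demand $m^i\ge 0$ and a nonempty finite set $\mathcal P^i$ of paths from its origin to its destination, the $\mathcal P^i$ pairwise disjoint, $\mathcal P=\bigcup_i\mathcal P^i$; and continuous nondecreasing edge costs $c_e:[0,\infty)\to[0,\infty)$. Feasible flows: $f\in\mathbb R_+^{\mathcal P}$ with $\sum_{p\in\mathcal P^i}f_p=m^i$; loads $x_e=\sum_{p\ni e}f_p$; path costs $c_p(f)=\sum_{e\in p}c_e(x_e)$. A Wardrop equilibrium is a feasible $f^*$ with $c_p(f^* )\le c_{p'}(f^* )$ whenever $p,p'\in\mathcal P^i$, $f^*_p>0$. Social cost $L(x)=\sum_e x_ec_e(x_e)$; $\mathrm{Opt}$ its minimum over feasible loads, $\mathrm{Eq}=L(x^*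 )$ at an equilibrium load, $\mathrm{PoA}=\mathrm{Eq}/\mathrm{Opt}$ (set to $1$ if $\mathrm{Opt}=0$). A function $g:(0,\infty)\to(0,\infty)$ is regularly varying at $\omega$ if $\lim_{t\to\omega}g(tx)/g(t)$ is finite and nonzero for every $x>0$; a regularly varying (at $\omega$) function $c$ is a benchmark for $(c_e)$ at $\omega$ if $\alpha_e=\lim_{x\to\omega}c_e(x)/c(x)\in[0,\infty]$ exists for every edge $e$. *)

theory Defs
  imports "HOL-Analysis.Analysis"
begin

text \<open>Paths are abstract objects of type 'p; each path p has an OD pair od p and an
  edge sequence pe p, which must be a walk with distinct edges from the origin to
  the destination of od p. Disjointness of the path sets P^i is automatic since
  od is a function.\<close>

fun is_walk :: "('e \<Rightarrow> 'v) \<Rightarrow> ('e \<Rightarrow> 'v) \<Rightarrow> 'v \<Rightarrow> 'v \<Rightarrow> 'e list \<Rightarrow> bool" where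
  "is_walk src tgt u v [] = (u = v)"
| "is_walk src tgt u v (e # es) = (src e = u \<and> is_walk src tgt (tgt e) v es)"

definition is_path :: "('e \<Rightarrow> 'v) \<Rightarrow> ('e \<Rightarrow> 'v) \<Rightarrow> 'v \<Rightarrow> 'v \<Rightarrow> 'e list \<Rightarrow> bool" where
  "is_path src tgt u v es \<longleftrightarrow> distinct es \<and> is_walk src tgt u v es"

definition routing_network ::
  "'e set \<Rightarrow> ('e \<Rightarrow> 'v) \<Rightarrow> ('e \<Rightarrow> 'v) \<Rightarrow> 'i set \<Rightarrow> ('i \<Rightarrow> 'v) \<Rightarrow> ('i \<Rightarrow> 'v)
   \<Rightarrow> 'p set \<Rightarrow> ('p \<Rightarrow> 'i) \<Rightarrow> ('p \<Rightarrow> 'e list) \<Rightarrow> ('e \<Rightarrow> real \<Rightarrow> real) \<Rightarrow> bool" where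
  "routing_network E src tgt I orig dest P od pe c \<longleftrightarrow>
     finite E \<and> finite I \<and> finite P \<and>
     od ` P \<subseteq> I \<and> (\<forall>i\<in>I. \<exists>p\<in>P. od p = i) \<and>
     (\<forall>p\<in>P. set (pe p) \<subseteq> E \<and> is_path src tgt (orig (od p)) (dest (od p)) (pe p)) \<and>
     (\<forall>e\<in>E. continuous_on {0..} (c e) \<and> mono_on {0..} (c e) \<and> (\<forall>x\<ge>0. c e x \<ge> 0))"

definition load :: "'p set \<Rightarrow> ('p \<Rightarrow> 'e list) \<Rightarrow> ('p \<Rightarrow> real) \<Rightarrow> 'e \<Rightarrow> real" where
  "load P pe f e = (\<Sum>p\<in>{p\<in>P. e \<in> set (pe p)}. f p)"

definition path_cost ::
  "'p set \<Rightarrow> ('p \<Rightarrow> 'e list) \<Rightarrow> ('e \<Rightarrow> real \<Rightarrow> real) \<Rightarrow> ('p \<Rightarrow> real) \<Rightarrow> 'p \<Rightarrow> real" where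
  "path_cost P pe c f p = (\<Sum>e\<in>set (pe p). c e (load P pe f e))"

definition feasible_flow ::
  "'i set \<Rightarrow> 'p set \<Rightarrow> ('p \<Rightarrow> 'i) \<Rightarrow> ('i \<Rightarrow> real) \<Rightarrow> ('p \<Rightarrow> real) \<Rightarrow> bool" where
  "feasible_flow I P od m f \<longleftrightarrow>
     (\<forall>p\<in>P. 0 \<le> f p) \<and> (\<forall>i\<in>I. (\<Sum>p\<in>{p\<in>P. od p = i}. f p) = m i)"

definition wardrop_eq ::
  "'i set \<Rightarrow> 'p set \<Rightarrow> ('p \<Rightarrow> 'i) \<Rightarrow> ('p \<Rightarrow> 'e list) \<Rightarrow> ('e \<Rightarrow> real \<Rightarrow> real)
   \<Rightarrow> ('i \<Rightarrow> real) \<Rightarrow> ('p \<Rightarrow> real) \<Rightarrow> bool" where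
  "wardrop_eq I P od pe c m f \<longleftrightarrow> feasible_flow I P od m f \<and>
     (\<forall>p\<in>P. \<forall>p'\<in>P. od p = od p' \<and> f p > 0 \<longrightarrow> path_cost P pe c f p \<le> path_cost P pe c f p')"

definition social_cost ::
  "'e set \<Rightarrow> 'p set \<Rightarrow> ('p \<Rightarrow> 'e list) \<Rightarrow> ('e \<Rightarrow> real \<Rightarrow> real) \<Rightarrow> ('p \<Rightarrow> real) \<Rightarrow> real" where
  "social_cost E P pe c f = (\<Sum>e\<in>E. load P pe f e * c e (load P pe f e))"

definition opt_cost ::
  "'e set \<Rightarrow> 'i set \<Rightarrow> 'p set \<Rightarrow> ('p \<Rightarrow> 'i) \<Rightarrow> ('p \<Rightarrow> 'e list) \<Rightarrow> ('e \<Rightarrow> real \<Rightarrow> real)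
   \<Rightarrow> ('i \<Rightarrow> real) \<Rightarrow> real" where
  "opt_cost E I P od pe c m = Inf (social_cost E P pe c ` {f. feasible_flow I P od m f})"

definition eq_cost ::
  "'e set \<Rightarrow> 'i set \<Rightarrow> 'p set \<Rightarrow> ('p \<Rightarrow> 'i) \<Rightarrow> ('p \<Rightarrow> 'e list) \<Rightarrow> ('e \<Rightarrow> real \<Rightarrow> real)
   \<Rightarrow> ('i \<Rightarrow> real) \<Rightarrow> real" where
  "eq_cost E I P od pe c m = social_cost E P pe c (SOME f. wardrop_eq I P od pe c m f)"

definition PoA ::
  "'e set \<Rightarrow> 'i set \<Rightarrow> 'p set \<Rightarrow> ('p \<Rightarrow> 'i) \<Rightarrow> ('p \<Rightarrow> 'e list) \<Rightarrow> ('e \<Rightarrow> real \<Rightarrow> real)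
   \<Rightarrow> ('i \<Rightarrow> real) \<Rightarrow> real" where
  "PoA E I P od pe c m =
     (if opt_cost E I P od pe c m = 0 then 1
      else eq_cost E I P od pe c m / opt_cost E I P od pe c m)"

definition omega_filter :: "ereal \<Rightarrow> real filter" where
  "omega_filter \<omega> = (if \<omega> = 0 then at_right 0 else at_top)"

definition regularly_varying :: "ereal \<Rightarrow> (real \<Rightarrow> real) \<Rightarrow> bool" where
  "regularly_varying \<omega> g \<longleftrightarrow> (\<forall>x>0. g x > 0) \<and>
     (\<forall>x>0. \<exists>L. L \<noteq> 0 \<and> ((\<lambda>t. g (t * x) / g t) \<longlongrightarrow> L) (omega_filter \<omega>))"

definition benchmark :: "ereal \<Rightarrow> 'e set \<Rightarrow> ('e \<Rightarrow> real \<Rightarrow> real) \<Rightarrow> (real \<Rightarrow> real) \<Rightarrow> bool" where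
  "benchmark \<omega> E c cb \<longleftrightarrow> regularly_varying \<omega> cb \<and>
     (\<forall>e\<in>E. \<exists>a::ereal. a \<ge> 0 \<and> ((\<lambda>x. ereal (c e x / cb x)) \<longlongrightarrow> a) (omega_filter \<omega>))"

definition alpha_edge :: "ereal \<Rightarrow> ('e \<Rightarrow> real \<Rightarrow> real) \<Rightarrow> (real \<Rightarrow> real) \<Rightarrow> 'e \<Rightarrow> ereal" where
  "alpha_edge \<omega> c cb e = Lim (omega_filter \<omega>) (\<lambda>x. ereal (c e x / cb x))"

definition alpha_od ::
  "ereal \<Rightarrow> 'p set \<Rightarrow> ('p \<Rightarrow> 'i) \<Rightarrow> ('p \<Rightarrow> 'e list) \<Rightarrow> ('e \<Rightarrow> real \<Rightarrow> real) \<Rightarrow> (real \<Rightarrow> real)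
   \<Rightarrow> 'i \<Rightarrow> ereal" where
  "alpha_od \<omega> P od pe c cb i =
     (INF p\<in>{p\<in>P. od p = i}. SUP e\<in>set (pe p). alpha_edge \<omega> c cb e)"

end

theory Submission
  imports Defs
begin

text \<open>Let \<open>M\<close> be the total demand and \<open>A = M * cb M\<close>. Every feasible flow costs at least
  \<open>\<delta> A\<close>: some path carries a fixed fraction of \<open>M\<close> and, by tightness, contains an edge
  with \<open>\<alpha>\<^sub>e > 0\<close>. For the upper bound, the equilibrium minimises the Beckmann potential
  \<open>\<Sum>\<^sub>e \<integral>\<^sub>0\<^sup>x\<^sub>e c\<^sub>e\<close>, and regular variation gives
  \<open>\<integral>\<^sub>0\<^sup>z c\<^sub>e \<approx> \<kappa> z c\<^sub>e(z)\<close> uniformly on \<open>[0, M]\<close> for edges with finite \<open>\<alpha>\<^sub>e\<close>, where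
  \<open>\<kappa>\<close> does not depend on the edge. Edges with \<open>\<alpha>\<^sub>e = \<infinity>\<close> carry little flow at equilibrium,
  and a competing flow is first rerouted off its expensive paths onto tight ones. Hence
  social cost and potential differ by the common factor \<open>\<kappa>\<close> up to \<open>o(A)\<close>, so
  \<open>Eq \<le> Opt + o(A)\<close> and \<open>PoA \<rightarrow> 1\<close>.\<close>

section \<open>Routing networks\<close>

lemma exists_ge_average:
  fixes a :: "'x \<Rightarrow> real"
  assumes "finite S" "S \<noteq> {}"
  obtains x where "x \<in> S" "(\<Sum>y\<in>S. a y) / card S \<le> a x"
proof -
  have "\<not> (\<forall>x\<in>S. a x < (\<Sum>y\<in>S. a y) / card S)"
    using sum_strict_mono[OF assms, of a "\<lambda>_. (\<Sum>y\<in>S. a y) / card S"] assms by auto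
  then show ?thesis using that by force
qed

locale routing_net =
  fixes E :: "'e set" and I :: "'i set" and P :: "'p set" and od :: "'p \<Rightarrow> 'i"
    and pe :: "'p \<Rightarrow> 'e list" and c :: "'e \<Rightarrow> real \<Rightarrow> real"
  assumes finite_E: "finite E" and finite_I: "finite I" and finite_P: "finite P"
    and od_in_I: "od ` P \<subseteq> I" and od_has_path: "\<And>i. i \<in> I \<Longrightarrow> \<exists>p\<in>P. od p = i"
    and path_edges: "\<And>p. p \<in> P \<Longrightarrow> set (pe p) \<subseteq> E"
    and cost_cont: "\<And>e. e \<in> E \<Longrightarrow> continuous_on {0..} (c e)"
    and cost_mono_on: "\<And>e. e \<in> E \<Longrightarrow> mono_on {0..} (c e)"
    and cost_nonneg: "\<And>e x. e \<in> E \<Longrightarrow> x \<ge> 0 \<Longrightarrow> c e x \<ge> 0"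
begin

abbreviation ld where "ld f e \<equiv> load P pe f e"
abbreviation pc where "pc f p \<equiv> path_cost P pe c f p"
abbreviation SC where "SC f \<equiv> social_cost E P pe c f"
abbreviation feas where "feas m f \<equiv> feasible_flow I P od m f"
abbreviation wardrop where "wardrop m f \<equiv> wardrop_eq I P od pe c m f"

lemma cost_mono: "e \<in> E \<Longrightarrow> 0 \<le> x \<Longrightarrow> x \<le> y \<Longrightarrow> c e x \<le> c e y"
  using cost_mono_on by (auto simp: mono_on_def)

lemma feasible_nonneg: "feas m g \<Longrightarrow> p \<in> P \<Longrightarrow> 0 \<le> g p"
  by (simp add: feasible_flow_def)

lemma sum_over_od_pairs: "(\<Sum>i\<in>I. \<Sum>p\<in>{p\<in>P. od p = i}. g p) = (\<Sum>p\<in>P. g p)"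
proof -
  have "(\<Sum>p\<in>P. g p) = (\<Sum>i\<in>od ` P. \<Sum>p\<in>{p\<in>P. od p = i}. g p)"
    using sum.image_gen[OF finite_P, of g od] .
  also have "\<dots> = (\<Sum>i\<in>I. \<Sum>p\<in>{p\<in>P. od p = i}. g p)"
    by (rule sum.mono_neutral_left[OF finite_I od_in_I]) (force intro!: sum.neutral)
  finally show ?thesis by simp
qed

lemma sum_edges_load_eq_sum_paths:
  "(\<Sum>e\<in>E. ld g e * w e) = (\<Sum>p\<in>P. g p * (\<Sum>e\<in>set (pe p). w e))"
proof -
  have "(\<Sum>e\<in>E. ld g e * w e) = (\<Sum>e\<in>E. \<Sum>p\<in>P. if e \<in> set (pe p) then g p * w e else 0)"
    unfolding load_def
    by (auto simp: sum_distrib_right sum.inter_filter[OF finite_P] intro!: sum.cong)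
  also have "\<dots> = (\<Sum>p\<in>P. \<Sum>e\<in>E. if e \<in> set (pe p) then g p * w e else 0)"
    by (rule sum.swap)
  also have "\<dots> = (\<Sum>p\<in>P. g p * (\<Sum>e\<in>set (pe p). w e))"
  proof (rule sum.cong[OF refl])
    fix p assume "p \<in> P"
    then have "{e\<in>E. e \<in> set (pe p)} = set (pe p)" using path_edges by auto
    then show "(\<Sum>e\<in>E. if e \<in> set (pe p) then g p * w e else 0) = g p * (\<Sum>e\<in>set (pe p). w e)"
      by (simp add: sum.inter_filter[OF finite_E, symmetric] sum_distrib_left)
  qed
  finally show ?thesis .
qed

lemma social_cost_eq_sum_paths: "SC f = (\<Sum>p\<in>P. f p * pc f p)"
  unfolding social_cost_def path_cost_def by (rule sum_edges_load_eq_sum_paths)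

lemma feasible_total: "feas m g \<Longrightarrow> (\<Sum>p\<in>P. g p) = (\<Sum>i\<in>I. m i)"
  using sum_over_od_pairs[of g] by (simp add: feasible_flow_def)

lemma load_nonneg: "feas m g \<Longrightarrow> 0 \<le> ld g e"
  unfolding load_def feasible_flow_def by (auto intro: sum_nonneg)

lemma load_le_total: "feas m g \<Longrightarrow> ld g e \<le> (\<Sum>i\<in>I. m i)"
proof -
  assume g: "feas m g"
  have "ld g e \<le> (\<Sum>p\<in>P. g p)" unfolding load_def
    by (rule sum_mono2[OF finite_P]) (use g in \<open>auto simp: feasible_nonneg\<close>)
  then show ?thesis using feasible_total[OF g] by simp
qed

lemma path_flow_le_load: "feas m g \<Longrightarrow> p \<in> P \<Longrightarrow> e \<in> set (pe p) \<Longrightarrow> g p \<le> ld g e"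
  unfolding load_def using finite_P
  by (intro member_le_sum) (auto simp: feasible_flow_def)

lemma load_pos_imp_used_path:
  assumes "feas m g" "ld g e > 0"
  obtains p where "p \<in> P" "e \<in> set (pe p)" "g p > 0"
proof -
  have "\<not> (\<forall>p\<in>{p\<in>P. e \<in> set (pe p)}. g p \<le> 0)"
    using assms(2) sum_nonpos[of "{p\<in>P. e \<in> set (pe p)}" g] by (auto simp: load_def)
  then show ?thesis using that by auto
qed

lemma edge_cost_le_path_cost:
  "feas m g \<Longrightarrow> p \<in> P \<Longrightarrow> e \<in> set (pe p) \<Longrightarrow> c e (ld g e) \<le> pc g p"
  unfolding path_cost_def
  by (rule member_le_sum) (use path_edges in \<open>auto intro!: cost_nonneg load_nonneg\<close>)

lemma edge_cost_le_social_cost: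
  "feas m g \<Longrightarrow> e \<in> E \<Longrightarrow> ld g e * c e (ld g e) \<le> SC g"
  unfolding social_cost_def
  by (rule member_le_sum[OF _ _ finite_E]) (auto intro!: mult_nonneg_nonneg load_nonneg cost_nonneg)

lemma social_cost_nonneg: "feas m g \<Longrightarrow> 0 \<le> SC g"
  unfolding social_cost_def by (auto intro!: sum_nonneg mult_nonneg_nonneg load_nonneg cost_nonneg)

lemma wardrop_variational_ineq:
  assumes f: "wardrop m f" and g: "feas m g"
  shows "(\<Sum>p\<in>P. f p * pc f p) \<le> (\<Sum>p\<in>P. g p * pc f p)"
proof -
  have ff: "feas m f" using f by (simp add: wardrop_eq_def)
  have "(\<Sum>p\<in>{p\<in>P. od p = i}. f p * pc f p) \<le> (\<Sum>p\<in>{p\<in>P. od p = i}. g p * pc f p)"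
    if i: "i \<in> I" for i
  proof -
    let ?Q = "{p\<in>P. od p = i}"
    have fQ: "finite ?Q" using finite_P by auto
    have "?Q \<noteq> {}" using od_has_path[OF i] by auto
    then have "Min (pc f ` ?Q) \<in> pc f ` ?Q" using fQ by (intro Min_in) auto
    then obtain q where q: "q \<in> ?Q" and q_eq: "pc f q = Min (pc f ` ?Q)" by auto
    have q_min: "pc f q \<le> pc f p" if "p \<in> ?Q" for p using fQ that by (simp add: q_eq)
    have "(\<Sum>p\<in>?Q. f p * pc f p) \<le> (\<Sum>p\<in>?Q. f p * pc f q)"
    proof (rule sum_mono)
      fix p assume p: "p \<in> ?Q"
      show "f p * pc f p \<le> f p * pc f q"
      proof (cases "f p > 0")
        case True then show ?thesis using f p q by (simp add: wardrop_eq_def)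
      next
        case False then have "f p = 0" using feasible_nonneg[OF ff] p by force
        then show ?thesis by simp
      qed
    qed
    also have "\<dots> = (\<Sum>p\<in>?Q. g p * pc f q)"
      using ff g i by (simp add: feasible_flow_def sum_distrib_right[symmetric])
    also have "\<dots> \<le> (\<Sum>p\<in>?Q. g p * pc f p)"
      by (rule sum_mono) (use feasible_nonneg[OF g] q_min in \<open>auto intro: mult_left_mono\<close>)
    finally show ?thesis .
  qed
  then have "(\<Sum>i\<in>I. \<Sum>p\<in>{p\<in>P. od p = i}. f p * pc f p)
      \<le> (\<Sum>i\<in>I. \<Sum>p\<in>{p\<in>P. od p = i}. g p * pc f p)"
    by (rule sum_mono)
  then show ?thesis by (simp add: sum_over_od_pairs)
qed

lemma exists_path_flow_ge:
  assumes I: "I \<noteq> {}" and g: "feas m g"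
  obtains p where "p \<in> P" "(\<Sum>i\<in>I. m i) / (card I * card P) \<le> g p"
proof -
  obtain i where i: "i \<in> I" "(\<Sum>i\<in>I. m i) / card I \<le> m i"
    using exists_ge_average[OF finite_I I] by blast
  let ?Q = "{p\<in>P. od p = i}"
  have Q: "finite ?Q" "?Q \<noteq> {}" using finite_P od_has_path[OF i(1)] by auto
  obtain p where p: "p \<in> ?Q" "(\<Sum>q\<in>?Q. g q) / card ?Q \<le> g p"
    using exists_ge_average[OF Q] by blast
  have card_Q: "card ?Q \<le> card P" "card ?Q > 0"
    using finite_P Q by (auto intro: card_mono simp: card_gt_0_iff)
  have sum_Q: "(\<Sum>q\<in>?Q. g q) = m i" using g i by (simp add: feasible_flow_def)
  then have "0 \<le> m i" using sum_nonneg[of ?Q g] feasible_nonneg[OF g] by auto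
  have "(\<Sum>i\<in>I. m i) / (card I * card P) = (\<Sum>i\<in>I. m i) / card I / card P" by simp
  also have "\<dots> \<le> m i / card P" by (rule divide_right_mono) (use i in auto)
  also have "\<dots> \<le> m i / card ?Q" using card_Q \<open>0 \<le> m i\<close> by (intro divide_left_mono) auto
  also have "\<dots> \<le> g p" using p sum_Q by simp
  finally show ?thesis using that p(1) by blast
qed

definition beckmann :: "'e \<Rightarrow> real \<Rightarrow> real" where
  "beckmann e z = integral {0..z} (c e)"

definition potential :: "('p \<Rightarrow> real) \<Rightarrow> real" where
  "potential f = (\<Sum>e\<in>E. beckmann e (ld f e))"

lemma cost_integrable: "e \<in> E \<Longrightarrow> 0 \<le> a \<Longrightarrow> c e integrable_on {a..b}"
  by (rule integrable_continuous_interval, rule continuous_on_subset[OF cost_cont]) auto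

lemma beckmann_diff: "e \<in> E \<Longrightarrow> 0 \<le> a \<Longrightarrow> a \<le> b \<Longrightarrow> beckmann e b - beckmann e a = integral {a..b} (c e)"
  unfolding beckmann_def
  using Henstock_Kurzweil_Integration.integral_combine[where f="c e" and a=0 and c=a and b=b]
    cost_integrable[of e 0 b]
  by simp

lemma beckmann_diff_bounds:
  assumes e: "e \<in> E" and ab: "0 \<le> a" "a \<le> b"
  shows "c e a * (b - a) \<le> beckmann e b - beckmann e a"
    and "beckmann e b - beckmann e a \<le> c e b * (b - a)"
proof -
  have "integral {a..b} (\<lambda>_. c e a) \<le> integral {a..b} (c e)"
    by (rule integral_le) (use cost_integrable[OF e ab(1)] cost_mono[OF e] ab in auto)
  then show "c e a * (b - a) \<le> beckmann e b - beckmann e a"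
    using ab by (simp add: beckmann_diff[OF e ab] mult.commute)
  have "integral {a..b} (c e) \<le> integral {a..b} (\<lambda>_. c e b)"
    by (rule integral_le) (use cost_integrable[OF e ab(1)] cost_mono[OF e] ab in auto)
  then show "beckmann e b - beckmann e a \<le> c e b * (b - a)"
    using ab by (simp add: beckmann_diff[OF e ab] mult.commute)
qed

lemma beckmann_zero [simp]: "beckmann e 0 = 0"
  by (simp add: beckmann_def)

lemma beckmann_subgradient:
  assumes "e \<in> E" "0 \<le> a" "0 \<le> b"
  shows "c e a * (b - a) \<le> beckmann e b - beckmann e a"
proof (cases "a \<le> b")
  case True then show ?thesis using beckmann_diff_bounds(1) assms by simp
next
  case False
  then have "beckmann e a - beckmann e b \<le> c e a * (a - b)"
    using beckmann_diff_bounds(2)[of e b a] assms by simp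
  then show ?thesis by (simp add: algebra_simps)
qed

lemma beckmann_nonneg: "e \<in> E \<Longrightarrow> 0 \<le> z \<Longrightarrow> 0 \<le> beckmann e z"
proof -
  assume "e \<in> E" "0 \<le> z"
  then have "c e 0 * z \<le> beckmann e z" "0 \<le> c e 0 * z"
    using beckmann_subgradient[of e 0 z] cost_nonneg[of e 0] by auto
  then show ?thesis by linarith
qed

lemma beckmann_le: "e \<in> E \<Longrightarrow> 0 \<le> z \<Longrightarrow> beckmann e z \<le> z * c e z"
  using beckmann_diff_bounds(2)[of e 0 z] by (simp add: mult.commute)

lemma beckmann_mono: "e \<in> E \<Longrightarrow> 0 \<le> a \<Longrightarrow> a \<le> b \<Longrightarrow> beckmann e a \<le> beckmann e b"
  using beckmann_diff_bounds(1)[of e a b] cost_nonneg[of e a] mult_nonneg_nonneg[of "c e a" "b - a"]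
  by linarith

text \<open>The variational inequality of an equilibrium is the first-order optimality condition of
  the convex potential.\<close>

lemma wardrop_potential_le:
  assumes f: "wardrop m f" and g: "feas m g"
  shows "potential f \<le> potential g"
proof -
  have ff: "feas m f" using f by (simp add: wardrop_eq_def)
  have "(\<Sum>e\<in>E. ld f e * c e (ld f e)) \<le> (\<Sum>e\<in>E. ld g e * c e (ld f e))"
    unfolding sum_edges_load_eq_sum_paths using wardrop_variational_ineq[OF f g]
    by (simp add: path_cost_def)
  then have "0 \<le> (\<Sum>e\<in>E. c e (ld f e) * (ld g e - ld f e))"
    by (simp add: sum_subtractf algebra_simps)
  also have "\<dots> \<le> (\<Sum>e\<in>E. beckmann e (ld g e) - beckmann e (ld f e))"
    by (rule sum_mono, rule beckmann_subgradient) (use load_nonneg[OF ff] load_nonneg[OF g] in auto)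
  finally show ?thesis by (simp add: potential_def sum_subtractf)
qed

section \<open>Existence of equilibria\<close>

lemma load_restrict: "ld (\<lambda>p. if p \<in> P then g p else 0) e = ld g e"
  unfolding load_def by (rule sum.cong) auto

lemma potential_restrict: "potential (\<lambda>p. if p \<in> P then g p else 0) = potential g"
  unfolding potential_def load_restrict ..

definition transfer :: "'p \<Rightarrow> 'p \<Rightarrow> real \<Rightarrow> ('p \<Rightarrow> real) \<Rightarrow> 'p \<Rightarrow> real" where
  "transfer p p' d f q = f q + (if q = p' then d else 0) - (if q = p then d else 0)"

lemma sum_transfer:
  "finite Q \<Longrightarrow> (\<Sum>q\<in>Q. transfer p p' d f q)
     = (\<Sum>q\<in>Q. f q) + (if p' \<in> Q then d else 0) - (if p \<in> Q then d else 0)"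
  by (simp add: transfer_def sum.distrib sum_subtractf)

lemma load_transfer:
  assumes "p \<in> P" "p' \<in> P"
  shows "ld (transfer p p' d f) e
    = ld f e + (if e \<in> set (pe p') then d else 0) - (if e \<in> set (pe p) then d else 0)"
  unfolding load_def using assms finite_P by (simp add: sum_transfer)

lemma transfer_feasible:
  assumes f: "feas m f" and p: "p \<in> P" "p' \<in> P" "od p = od p'" and d: "0 \<le> d" "d \<le> f p"
  shows "feas m (transfer p p' d f)"
  unfolding feasible_flow_def
proof safe
  fix q assume "q \<in> P"
  then show "0 \<le> transfer p p' d f q"
    using feasible_nonneg[OF f] d by (auto simp: transfer_def)
next
  fix i assume "i \<in> I"
  then show "(\<Sum>q\<in>{q\<in>P. od q = i}. transfer p p' d f q) = m i"
    using f p finite_P by (simp add: sum_transfer feasible_flow_def)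
qed

lemma path_cost_diff:
  assumes "p \<in> P" "p' \<in> P"
  shows "pc f p' - pc f p = (\<Sum>e\<in>set (pe p') - set (pe p). c e (ld f e))
                          - (\<Sum>e\<in>set (pe p) - set (pe p'). c e (ld f e))"
proof -
  have split: "(\<Sum>e\<in>A. c e (ld f e)) = (\<Sum>e\<in>A - B. c e (ld f e)) + (\<Sum>e\<in>A \<inter> B. c e (ld f e))"
    if "finite A" for A B :: "'e set"
    using sum.subset_diff[of "A \<inter> B" A] that by (simp add: Diff_Int)
  show ?thesis
    unfolding path_cost_def
    using split[of "set (pe p')" "set (pe p)"] split[of "set (pe p)" "set (pe p')"]
    by (simp add: Int_commute)
qed

lemma potential_transfer_le:
  assumes f: "feas m f" and p: "p \<in> P" "p' \<in> P" and d: "0 < d" "d \<le> f p"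
  shows "potential (transfer p p' d f) - potential f
    \<le> d * ((\<Sum>e\<in>set (pe p') - set (pe p). c e (ld f e + d))
           - (\<Sum>e\<in>set (pe p) - set (pe p'). c e (ld f e - d)))"
proof -
  let ?A = "set (pe p') - set (pe p)" and ?B = "set (pe p) - set (pe p')"
  let ?h = "\<lambda>e. beckmann e (ld (transfer p p' d f) e) - beckmann e (ld f e)"
  have AB: "?A \<subseteq> E" "?B \<subseteq> E" using path_edges p by auto
  have "potential (transfer p p' d f) - potential f = (\<Sum>e\<in>E. ?h e)"
    by (simp add: potential_def sum_subtractf)
  also have "\<dots> = (\<Sum>e\<in>?A \<union> ?B. ?h e)"
    by (rule sum.mono_neutral_right[OF finite_E]) (use AB in \<open>auto simp: load_transfer[OF p]\<close>)
  also have "\<dots> = (\<Sum>e\<in>?A. ?h e) + (\<Sum>e\<in>?B. ?h e)"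
    by (rule sum.union_disjoint) auto
  also have "\<dots> \<le> (\<Sum>e\<in>?A. d * c e (ld f e + d)) + (\<Sum>e\<in>?B. - (d * c e (ld f e - d)))"
  proof (rule add_mono; rule sum_mono)
    fix e assume e: "e \<in> ?A"
    have "beckmann e (ld f e + d) - beckmann e (ld f e) \<le> c e (ld f e + d) * d"
      using beckmann_diff_bounds(2)[of e "ld f e" "ld f e + d"] AB e load_nonneg[OF f] d by auto
    then show "?h e \<le> d * c e (ld f e + d)" using e by (simp add: load_transfer[OF p] mult.commute)
  next
    fix e assume e: "e \<in> ?B"
    have "d \<le> ld f e" using path_flow_le_load[OF f p(1)] e d by fastforce
    then have "c e (ld f e - d) * d \<le> beckmann e (ld f e) - beckmann e (ld f e - d)"
      using beckmann_diff_bounds(1)[of e "ld f e - d" "ld f e"] AB e d by auto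
    then show "?h e \<le> - (d * c e (ld f e - d))" using e by (simp add: load_transfer[OF p] mult.commute)
  qed
  finally show ?thesis by (simp add: sum_distrib_left sum_negf right_diff_distrib)
qed

lemma cost_tendsto:
  assumes "e \<in> E" "(g \<longlongrightarrow> x) F" "0 \<le> x" "\<forall>\<^sub>F t in F. 0 \<le> g t"
  shows "((\<lambda>t. c e (g t)) \<longlongrightarrow> c e x) F"
  by (rule continuous_on_tendsto_compose[OF cost_cont]) (use assms in auto)

text \<open>Shifting a little flow from a used path to a strictly cheaper one of the same
  OD pair decreases the potential, since its right derivative is the cost difference.\<close>

lemma potential_minimiser_is_wardrop:
  assumes f: "feas m f" and min: "\<And>g. feas m g \<Longrightarrow> potential f \<le> potential g"
  shows "wardrop m f"
proof -
  have "pc f p \<le> pc f p'" if p: "p \<in> P" "p' \<in> P" "od p = od p'" "f p > 0" for p p'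
  proof (rule ccontr)
    assume "\<not> pc f p \<le> pc f p'"
    let ?A = "set (pe p') - set (pe p)" and ?B = "set (pe p) - set (pe p')"
    define W where "W d = (\<Sum>e\<in>?A. c e (ld f e + d)) - (\<Sum>e\<in>?B. c e (ld f e - d))" for d
    have pos: "\<forall>\<^sub>F d in at_right 0. 0 < d \<and> d \<le> f p"
      using p(4) by (simp add: eventually_at_right_field) (meson less_le_not_le)
    have "((\<lambda>d. c e (ld f e + d)) \<longlongrightarrow> c e (ld f e + 0)) (at_right 0)" if "e \<in> ?A" for e
      using pos that path_edges[OF p(2)] load_nonneg[OF f, of e]
      by (intro cost_tendsto tendsto_intros) (auto elim: eventually_mono)
    moreover have "((\<lambda>d. c e (ld f e - d)) \<longlongrightarrow> c e (ld f e - 0)) (at_right 0)" if "e \<in> ?B" for e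
      using pos that path_edges[OF p(1)] load_nonneg[OF f, of e] path_flow_le_load[OF f p(1), of e]
      by (intro cost_tendsto tendsto_intros) (auto elim!: eventually_mono)
    ultimately have "(W \<longlongrightarrow> W 0) (at_right 0)" unfolding W_def by (intro tendsto_intros) auto
    moreover have "W 0 < 0"
      using path_cost_diff[OF p(1,2), of f] \<open>\<not> pc f p \<le> pc f p'\<close> by (simp add: W_def)
    ultimately have "\<forall>\<^sub>F d in at_right 0. W d < 0 \<and> 0 < d \<and> d \<le> f p"
      using pos by (auto intro: eventually_conj order_tendstoD)
    then obtain d where d: "W d < 0" "0 < d" "d \<le> f p"
      using eventually_happens[of _ "at_right (0::real)"] by auto
    have "potential (transfer p p' d f) - potential f < 0"
      using potential_transfer_le[OF f p(1,2) d(2,3)] mult_pos_neg[OF d(2,1)]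
      by (simp add: W_def)
    moreover have "potential f \<le> potential (transfer p p' d f)"
      using min[OF transfer_feasible[OF f p(1-3)]] d by simp
    ultimately show False by simp
  qed
  then show ?thesis using f by (auto simp: wardrop_eq_def)
qed

definition supported_flows :: "('i \<Rightarrow> real) \<Rightarrow> ('p \<Rightarrow> real) set" where
  "supported_flows m = {f. feas m f \<and> (\<forall>p. p \<notin> P \<longrightarrow> f p = 0)}"

lemma restrict_supported_flows: "feas m f \<Longrightarrow> (\<lambda>p. if p \<in> P then f p else 0) \<in> supported_flows m"
  by (simp add: supported_flows_def feasible_flow_def)

lemma feasible_flow_exists:
  fixes m :: "'i \<Rightarrow> real"
  assumes m: "\<And>i. i \<in> I \<Longrightarrow> m i \<ge> 0"
  shows "\<exists>f. feas m f"
proof -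
  define f where "f p = m (od p) / card {q\<in>P. od q = od p}" for p
  have "card {q\<in>P. od q = i} > 0" if "i \<in> I" for i
    using od_has_path[OF that] finite_P by (auto simp: card_gt_0_iff)
  then have "feas m f" using m od_in_I by (auto simp: feasible_flow_def f_def)
  then show ?thesis by blast
qed

lemma compact_supported_flows: "compact (supported_flows m)"
proof -
  define X where "X p = (if p \<in> P then {0..\<Sum>i\<in>I. m i} else {0::real})" for p
  have "compactin (product_topology (\<lambda>_. euclidean) UNIV) (Pi\<^sub>E UNIV X)"
    by (subst compactin_PiE) (auto simp: X_def)
  then have "compact (Pi\<^sub>E UNIV X)" by (simp add: euclidean_product_topology)
  moreover have "closed (supported_flows m)"
  proof -
    have "supported_flows m = (\<Inter>p\<in>P. {f. 0 \<le> f p}) \<inter> (\<Inter>i\<in>I. {f. (\<Sum>p\<in>{p\<in>P. od p = i}. f p) = m i})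
        \<inter> (\<Inter>p\<in>- P. {f. f p = 0})"
      by (auto simp: supported_flows_def feasible_flow_def)
    also have "closed \<dots>"
      by (intro closed_Int closed_INT ballI closed_Collect_le closed_Collect_eq continuous_on_sum
          continuous_on_const continuous_on_product_coordinates)
    finally show ?thesis .
  qed
  moreover have "supported_flows m \<subseteq> Pi\<^sub>E UNIV X"
  proof
    fix f assume "f \<in> supported_flows m"
    then have f: "feas m f" "\<And>p. p \<notin> P \<Longrightarrow> f p = 0" by (auto simp: supported_flows_def)
    have "f p \<le> (\<Sum>i\<in>I. m i)" if "p \<in> P" for p
      using member_le_sum[OF that _ finite_P, of f] feasible_nonneg[OF f(1)] feasible_total[OF f(1)]
      by simp
    then show "f \<in> Pi\<^sub>E UNIV X"
      using f feasible_nonneg[OF f(1)] by (auto simp: X_def)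
  qed
  ultimately have "compact (Pi\<^sub>E UNIV X \<inter> supported_flows m)" by (intro compact_Int_closed)
  then show ?thesis using \<open>supported_flows m \<subseteq> Pi\<^sub>E UNIV X\<close> by (simp add: Int_absorb1)
qed

lemma potential_minimiser_exists:
  assumes m: "\<And>i. i \<in> I \<Longrightarrow> m i \<ge> 0"
  shows "\<exists>f. feas m f \<and> (\<forall>g. feas m g \<longrightarrow> potential f \<le> potential g)"
proof -
  let ?S = "supported_flows m"
  have "?S \<noteq> {}" using feasible_flow_exists[of m] m restrict_supported_flows by blast
  moreover have "continuous_on ?S potential"
    unfolding potential_def
  proof (intro continuous_on_sum)
    fix e assume e: "e \<in> E"
    have "continuous_on {0..\<Sum>i\<in>I. m i} (beckmann e)"
      unfolding beckmann_def by (rule indefinite_integral_continuous_1, rule cost_integrable[OF e]) simp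
    moreover have "continuous_on ?S (\<lambda>f. ld f e)"
      unfolding load_def
      by (intro continuous_on_sum continuous_on_subset[OF continuous_on_product_coordinates]) auto
    moreover have "(\<lambda>f. ld f e) ` ?S \<subseteq> {0..\<Sum>i\<in>I. m i}"
      using load_nonneg load_le_total by (force simp: supported_flows_def)
    ultimately show "continuous_on ?S (\<lambda>f. beckmann e (ld f e))"
      by (rule continuous_on_compose2)
  qed
  ultimately obtain f where "f \<in> ?S" "\<And>g. g \<in> ?S \<Longrightarrow> potential f \<le> potential g"
    using continuous_attains_inf[OF compact_supported_flows] by blast
  moreover have "potential f \<le> potential g" if "feas m g" for g
    using calculation(2)[OF restrict_supported_flows[OF that]] by (simp add: potential_restrict)
  ultimately show ?thesis by (auto simp: supported_flows_def)
qed

lemma wardrop_exists: "(\<And>i. i \<in> I \<Longrightarrow> m i \<ge> 0) \<Longrightarrow> \<exists>f. wardrop m f"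
  using potential_minimiser_exists potential_minimiser_is_wardrop by blast

lemma PoA_close_to_one:
  assumes m: "\<And>i. i \<in> I \<Longrightarrow> 0 \<le> m i" and \<delta>: "\<delta> > 0" and A: "A > 0"
    and lower: "\<And>g. feas m g \<Longrightarrow> \<delta> * A \<le> SC g"
    and upper: "\<And>f g. wardrop m f \<Longrightarrow> feas m g \<Longrightarrow> SC f \<le> SC g + \<theta> * A"
  shows "\<bar>PoA E I P od pe c m - 1\<bar> \<le> \<theta> / \<delta>"
proof -
  define f where "f = (SOME f. wardrop m f)"
  have f: "wardrop m f" unfolding f_def using wardrop_exists[OF m] by (rule someI_ex)
  then have ff: "feas m f" by (simp add: wardrop_eq_def)
  define S where "S = SC ` {g. feas m g}"
  have S: "S \<noteq> {}" "bdd_below S"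
    using ff social_cost_nonneg by (auto simp: S_def intro!: bdd_belowI[of _ 0])
  define Opt where "Opt = Inf S"
  have "\<delta> * A \<le> Opt" unfolding Opt_def by (rule cInf_greatest[OF S(1)]) (auto simp: S_def lower)
  then have Opt_pos: "Opt > 0" using \<delta> A by (smt (verit) mult_pos_pos)
  have "SC f - \<theta> * A \<le> Opt" unfolding Opt_def
    by (rule cInf_greatest[OF S(1)]) (auto simp: S_def dest: upper[OF f])
  moreover have "Opt \<le> SC f" unfolding Opt_def by (rule cInf_lower[OF _ S(2)]) (use ff in \<open>auto simp: S_def\<close>)
  moreover have "PoA E I P od pe c m = SC f / Opt"
    using Opt_pos by (simp add: PoA_def eq_cost_def opt_cost_def Opt_def S_def f_def)
  ultimately have "\<bar>PoA E I P od pe c m - 1\<bar> \<le> (\<theta> * A) / Opt"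
    using Opt_pos by (simp add: divide_right_mono abs_le_iff field_simps)
  also have "\<dots> \<le> (\<theta> * A) / (\<delta> * A)"
    using \<open>\<delta> * A \<le> Opt\<close> \<open>SC f - \<theta> * A \<le> Opt\<close> \<open>Opt \<le> SC f\<close> \<delta> A Opt_pos
    by (intro divide_left_mono mult_pos_pos) auto
  finally show ?thesis using A by simp
qed

end

section \<open>Integrals of monotone functions\<close>

lemma mono_on_integral_bounds:
  fixes g :: "real \<Rightarrow> real"
  assumes mono: "mono_on {a..b} g" and ab: "a \<le> b"
  shows "g a * (b - a) \<le> integral {a..b} g" and "integral {a..b} g \<le> g b * (b - a)"
proof -
  have int: "g integrable_on {a..b}" by (rule integrable_on_mono_on[OF mono])
  have "g a \<le> g x" "g x \<le> g b" if "x \<in> {a..b}" for x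
    using mono_onD[OF mono] that ab by auto
  then have lo: "integral {a..b} (\<lambda>_. g a) \<le> integral {a..b} g"
    and up: "integral {a..b} g \<le> integral {a..b} (\<lambda>_. g b)"
    by (auto intro!: integral_le[OF integrable_const_ivl int] integral_le[OF int integrable_const_ivl]
        simp del: integral_const_real)
  from lo show "g a * (b - a) \<le> integral {a..b} g" using ab by (simp add: mult.commute)
  from up show "integral {a..b} g \<le> g b * (b - a)" using ab by (simp add: mult.commute)
qed

lemma integral_uniform_partition:
  fixes g :: "real \<Rightarrow> real"
  assumes int: "g integrable_on {0..1}" and N: "N > 0"
  shows "integral {0..1} g = (\<Sum>k<N. integral {real k / N..real (Suc k) / N} g)"
proof -
  have "integral {0..real n / N} g = (\<Sum>k<n. integral {real k / N..real (Suc k) / N} g)"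
    if "n \<le> N" for n
    using that
  proof (induction n)
    case (Suc n)
    have le: "0 \<le> real n / N" "real n / N \<le> real (Suc n) / N" "real (Suc n) / N \<le> 1"
      using Suc.prems N by (auto simp: divide_right_mono)
    have "integral {0..real n / N} g + integral {real n / N..real (Suc n) / N} g
          = integral {0..real (Suc n) / N} g"
      by (rule Henstock_Kurzweil_Integration.integral_combine)
         (use le in \<open>auto intro: integrable_subinterval_real[OF int]\<close>)
    then show ?case using Suc by simp
  qed simp
  from this[of N] show ?thesis using N by simp
qed

lemma mono_on_riemann_bounds:
  fixes g :: "real \<Rightarrow> real"
  assumes mono: "mono_on {0..1} g" and nonneg: "\<And>x. 0 \<le> x \<Longrightarrow> x \<le> 1 \<Longrightarrow> 0 \<le> g x"
    and N: "N > 0"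
  shows "(\<Sum>k\<in>{1..<N}. g (real k / N)) / N \<le> integral {0..1} g"
    and "integral {0..1} g \<le> (\<Sum>k\<in>{1..N}. g (real k / N)) / N"
proof -
  have cell: "g (real k / N) / N \<le> integral {real k / N..real (Suc k) / N} g
      \<and> integral {real k / N..real (Suc k) / N} g \<le> g (real (Suc k) / N) / N"
    if k: "k < N" for k
  proof -
    let ?a = "real k / N" and ?b = "real (Suc k) / N"
    have ab: "0 \<le> ?a" "?a \<le> ?b" "?b \<le> 1"
      using k N by (auto simp: divide_right_mono)
    have "?b - ?a = 1 / N" by (simp add: diff_divide_distrib[symmetric])
    then show ?thesis
      using mono_on_integral_bounds[OF mono_on_subset[OF mono, of "{?a..?b}"] ab(2)] ab(1,3)
      by auto
  qed
  have part: "integral {0..1} g = (\<Sum>k<N. integral {real k / N..real (Suc k) / N} g)"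
    by (rule integral_uniform_partition[OF integrable_on_mono_on[OF mono] N])
  have "(\<Sum>k\<in>{1..<N}. g (real k / N)) \<le> (\<Sum>k<N. g (real k / N))"
    by (rule sum_mono2) (use nonneg N in \<open>auto simp: divide_le_eq\<close>)
  also have "\<dots> / N = (\<Sum>k<N. g (real k / N) / N)" by (simp add: sum_divide_distrib)
  also have "\<dots> \<le> integral {0..1} g" unfolding part by (rule sum_mono) (use cell in auto)
  finally show "(\<Sum>k\<in>{1..<N}. g (real k / N)) / N \<le> integral {0..1} g"
    using N by (simp add: divide_right_mono)
  have "integral {0..1} g \<le> (\<Sum>k<N. g (real (Suc k) / N) / N)"
    unfolding part by (rule sum_mono) (use cell in auto)
  also have "\<dots> = (\<Sum>k<N. g (real (Suc k) / N)) / N" by (simp add: sum_divide_distrib)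
  also have "(\<Sum>k<N. g (real (Suc k) / N)) = (\<Sum>k\<in>{1..N}. g (real k / N))"
    by (rule sum.reindex_bij_witness[of _ "\<lambda>k. k - 1" Suc]) auto
  finally show "integral {0..1} g \<le> (\<Sum>k\<in>{1..N}. g (real k / N)) / N" .
qed

text \<open>Riemann sums squeeze the integral of a monotone function uniformly, so pointwise
  convergence of monotone integrands on \<open>(0,1]\<close> suffices.\<close>

lemma integral_tendsto_mono_on:
  fixes G :: "'a \<Rightarrow> real \<Rightarrow> real" and H :: "real \<Rightarrow> real"
  assumes G: "\<forall>\<^sub>F z in F. mono_on {0..1} (G z) \<and> (\<forall>u\<in>{0..1}. 0 \<le> G z u)"
    and H: "mono_on {0..1} H" "\<And>u. 0 \<le> u \<Longrightarrow> u \<le> 1 \<Longrightarrow> 0 \<le> H u"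
    and lim: "\<And>u. 0 < u \<Longrightarrow> u \<le> 1 \<Longrightarrow> ((\<lambda>z. G z u) \<longlongrightarrow> H u) F"
  shows "((\<lambda>z. integral {0..1} (G z)) \<longlongrightarrow> integral {0..1} H) F"
proof (rule tendstoI)
  fix \<epsilon> :: real assume "\<epsilon> > 0"
  obtain N :: nat where N: "(H 1 + 1) / \<epsilon> < N" using reals_Archimedean2 by blast
  have "0 < (H 1 + 1) / \<epsilon>" using H(2)[of 1] \<open>\<epsilon> > 0\<close> by simp
  then have "real N > 0" using N by linarith
  then have N_pos: "N > 0" by simp
  have N_eps: "(H 1 + 1) / N < \<epsilon>"
    using N N_pos \<open>\<epsilon> > 0\<close> by (simp add: divide_less_eq mult.commute)
  define lower where "lower g = (\<Sum>k\<in>{1..<N}. g (real k / N)) / N" for g :: "real \<Rightarrow> real"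
  define upper where "upper g = (\<Sum>k\<in>{1..N}. g (real k / N)) / N" for g :: "real \<Rightarrow> real"
  have "real k / N \<le> 1" if "k \<le> N" for k using that by (simp add: divide_le_eq)
  then have "((\<lambda>z. lower (G z)) \<longlongrightarrow> lower H) F" "((\<lambda>z. upper (G z)) \<longlongrightarrow> upper H) F"
    unfolding lower_def upper_def using N_pos by (auto intro!: tendsto_intros lim)
  then have ev: "\<forall>\<^sub>F z in F. lower H - 1 / N < lower (G z)" "\<forall>\<^sub>F z in F. upper (G z) < upper H + 1 / N"
    using N_pos by (auto intro: order_tendstoD)
  have gap: "upper H - lower H = H 1 / N"
  proof -
    have "(\<Sum>k\<in>{1..N}. H (real k / N)) = (\<Sum>k\<in>{1..<N}. H (real k / N)) + H (real N / N)"
      using N_pos by (simp add: atLeastLessThanSuc_atLeastAtMost[symmetric] sum.atLeastLessThan_Suc)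
    then show ?thesis using N_pos by (simp add: upper_def lower_def diff_divide_distrib[symmetric])
  qed
  have H_bounds: "lower H \<le> integral {0..1} H" "integral {0..1} H \<le> upper H"
    using mono_on_riemann_bounds[OF H N_pos] by (simp_all add: lower_def upper_def)
  from ev G show "\<forall>\<^sub>F z in F. dist (integral {0..1} (G z)) (integral {0..1} H) < \<epsilon>"
  proof eventually_elim
    case (elim z)
    then have "lower (G z) \<le> integral {0..1} (G z)" "integral {0..1} (G z) \<le> upper (G z)"
      using mono_on_riemann_bounds[of "G z", OF _ _ N_pos] by (simp_all add: lower_def upper_def)
    then show ?case using elim gap H_bounds N_eps by (simp add: dist_real_def abs_less_iff add_divide_distrib)
  qed
qed

lemma integral_rescale_unit:
  fixes g :: "real \<Rightarrow> real"
  assumes z: "z > 0"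
  shows "integral {0..z} g = z * integral {0..1} (\<lambda>u. g (z * u))"
proof -
  have "(\<lambda>x. x / z) ` {0..z} = {0..1}"
  proof
    show "{0..1} \<subseteq> (\<lambda>x. x / z) ` {0..z}"
    proof
      fix u :: real assume "u \<in> {0..1}"
      then have "z * u \<in> {0..z}" "u = (z * u) / z" using z by (auto simp: mult_le_cancel_left1)
      then show "u \<in> (\<lambda>x. x / z) ` {0..z}" by blast
    qed
  qed (use z in auto)
  then show ?thesis
    using integral_stretch_real[of z 0 z g] z by simp
qed

section \<open>Regularly varying benchmarks\<close>

text \<open>The filter \<open>F\<close> stands for \<open>at_right 0\<close> or \<open>at_top\<close>; the monotone cost asymptotic to a
  multiple of the benchmark is what makes the limit function of the benchmark monotone.\<close>

locale regular_benchmark =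
  fixes F :: "real filter" and cb :: "real \<Rightarrow> real"
  assumes F_proper: "F \<noteq> bot"
    and eventually_pos: "\<forall>\<^sub>F x in F. x > 0"
    and filterlim_scale: "\<And>s. s > 0 \<Longrightarrow> filterlim (\<lambda>x. x * s) F F"
    and eventually_interval: "\<And>G \<eta>. eventually G F \<Longrightarrow> 0 < \<eta> \<Longrightarrow> \<eta> \<le> 1 \<Longrightarrow>
                  \<forall>\<^sub>F M in F. \<forall>z. \<eta> * M \<le> z \<and> z \<le> M \<longrightarrow> G z"
    and benchmark_pos: "\<And>x. x > 0 \<Longrightarrow> cb x > 0"
    and benchmark_rv: "\<And>s. s > 0 \<Longrightarrow> \<exists>L. L \<noteq> 0 \<and> ((\<lambda>t. cb (t * s) / cb t) \<longlongrightarrow> L) F"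
    and monotone_witness: "\<exists>ce a. a > 0 \<and> mono_on {0..} ce \<and> ((\<lambda>x. ce x / cb x) \<longlongrightarrow> a) F"
begin

definition rv_limit :: "real \<Rightarrow> real" where
  "rv_limit s = (if s \<le> 0 then 0 else Lim F (\<lambda>t. cb (t * s) / cb t))"

text \<open>By Karamata's theorem \<open>rv_limit s = s powr \<rho>\<close> and \<open>kappa = 1 / (1 + \<rho>)\<close>;
  only \<open>0 < kappa \<le> 1\<close> is needed.\<close>

definition kappa :: real where
  "kappa = integral {0..1} rv_limit"

lemma eventually_benchmark_pos: "\<forall>\<^sub>F x in F. cb x > 0"
  using eventually_pos by eventually_elim (rule benchmark_pos)

lemma tendsto_rv_limit: "s > 0 \<Longrightarrow> ((\<lambda>t. cb (t * s) / cb t) \<longlongrightarrow> rv_limit s) F"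
proof -
  assume s: "s > 0"
  obtain L where L: "((\<lambda>t. cb (t * s) / cb t) \<longlongrightarrow> L) F" using benchmark_rv[OF s] by auto
  then show ?thesis using s tendsto_Lim[OF F_proper L] by (simp add: rv_limit_def)
qed

lemma rv_limit_pos: "s > 0 \<Longrightarrow> rv_limit s > 0"
proof -
  assume s: "s > 0"
  obtain L where L: "L \<noteq> 0" "((\<lambda>t. cb (t * s) / cb t) \<longlongrightarrow> L) F" using benchmark_rv[OF s] by auto
  have "rv_limit s = L" using tendsto_unique[OF F_proper tendsto_rv_limit[OF s] L(2)] .
  moreover have "\<forall>\<^sub>F t in F. 0 \<le> cb (t * s) / cb t"
    using eventually_pos
  proof eventually_elim
    case (elim t)
    then have "cb (t * s) > 0" "cb t > 0" using s benchmark_pos by auto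
    then show ?case by simp
  qed
  then have "L \<ge> 0" by (rule tendsto_lowerbound[OF L(2) _ F_proper])
  ultimately show ?thesis using L by auto
qed

lemma rv_limit_nonneg: "0 \<le> rv_limit s"
  using rv_limit_pos[of s] by (cases "s \<le> 0") (auto simp: rv_limit_def)

lemma rv_limit_one: "rv_limit 1 = 1"
proof -
  have "\<forall>\<^sub>F t in F. 1 = cb (t * 1) / cb t"
    using eventually_benchmark_pos by eventually_elim simp
  from tendsto_unique[OF F_proper tendsto_rv_limit[of 1] Lim_transform_eventually[OF tendsto_const this]]
  show ?thesis by simp
qed

lemma ratio_scaled_tendsto:
  assumes lim: "((\<lambda>x. ce x / cb x) \<longlongrightarrow> a) F" and s: "s > 0"
  shows "((\<lambda>t. ce (t * s) / cb t) \<longlongrightarrow> a * rv_limit s) F"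
proof -
  have "((\<lambda>t. ce (t * s) / cb (t * s) * (cb (t * s) / cb t)) \<longlongrightarrow> a * rv_limit s) F"
    by (intro tendsto_mult filterlim_compose[OF lim filterlim_scale[OF s]] tendsto_rv_limit[OF s])
  moreover have "\<forall>\<^sub>F t in F. ce (t * s) / cb (t * s) * (cb (t * s) / cb t) = ce (t * s) / cb t"
    using eventually_pos
  proof eventually_elim
    case (elim t)
    then have "cb (t * s) > 0" using s benchmark_pos by auto
    then show ?case by simp
  qed
  ultimately show ?thesis by (rule Lim_transform_eventually)
qed

lemma rv_limit_mono: "mono_on {0..} rv_limit"
proof (rule mono_onI)
  fix s u :: real assume su: "s \<in> {0..}" "u \<in> {0..}" "s \<le> u"
  show "rv_limit s \<le> rv_limit u"
  proof (cases "s \<le> 0")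
    case True then show ?thesis using rv_limit_nonneg[of u] by (simp add: rv_limit_def)
  next
    case False
    obtain ce a where w: "a > 0" "mono_on {0..} ce" "((\<lambda>x. ce x / cb x) \<longlongrightarrow> a) F"
      using monotone_witness by auto
    have ev: "\<forall>\<^sub>F t in F. ce (t * s) / cb t \<le> ce (t * u) / cb t"
      using eventually_pos
    proof eventually_elim
      case (elim t)
      have "ce (t * s) \<le> ce (t * u)" by (rule mono_onD[OF w(2)]) (use elim su False in auto)
      then show ?case using benchmark_pos[OF elim] by (simp add: divide_right_mono)
    qed
    have "a * rv_limit s \<le> a * rv_limit u"
      using tendsto_le[OF F_proper ratio_scaled_tendsto[OF w(3), of u] ratio_scaled_tendsto[OF w(3), of s] ev]
        su False by auto
    then show ?thesis using w(1) by simp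
  qed
qed

lemma rv_limit_mono_unit: "mono_on {0..1} rv_limit"
  by (rule mono_on_subset[OF rv_limit_mono]) auto

lemma kappa_le_one: "kappa \<le> 1"
  using mono_on_riemann_bounds(2)[OF rv_limit_mono_unit rv_limit_nonneg, of 1]
  by (simp add: kappa_def rv_limit_one)

lemma kappa_pos: "kappa > 0"
proof -
  have "{1..<2::nat} = {1}" by auto
  then have "rv_limit (1 / 2) / 2 \<le> kappa"
    using mono_on_riemann_bounds(1)[OF rv_limit_mono_unit rv_limit_nonneg, of 2]
    by (simp add: kappa_def)
  then show ?thesis using rv_limit_pos[of "1 / 2"] by simp
qed

lemma eventually_cost_pos:
  assumes lim: "((\<lambda>x. ce x / cb x) \<longlongrightarrow> a) F" and a: "a > 0"
  shows "\<forall>\<^sub>F z in F. z > 0 \<and> ce z > 0"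
  using order_tendstoD(1)[OF lim a] eventually_pos
  by eventually_elim (use benchmark_pos in \<open>fastforce simp: zero_less_divide_iff\<close>)

lemma eventually_cost_le:
  assumes lim: "((\<lambda>x. ce x / cb x) \<longlongrightarrow> a) F" and "a < b"
  shows "\<forall>\<^sub>F M in F. ce M \<le> b * cb M"
  using order_tendstoD(2)[OF lim \<open>a < b\<close>] eventually_pos
  by eventually_elim (use benchmark_pos in \<open>auto simp: divide_less_eq less_imp_le\<close>)

lemma eventually_cost_ge:
  assumes lim: "((\<lambda>x. ce x / cb x) \<longlongrightarrow> a) F" and a: "a > 0" and s: "s > 0"
  shows "\<forall>\<^sub>F M in F. a * rv_limit s / 2 * cb M \<le> ce (M * s)"
proof -
  have "\<forall>\<^sub>F M in F. a * rv_limit s / 2 < ce (M * s) / cb M"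
    by (rule order_tendstoD(1)[OF ratio_scaled_tendsto[OF lim s]]) (use a rv_limit_pos[OF s] in simp)
  with eventually_pos show ?thesis
    by eventually_elim (use benchmark_pos in \<open>auto simp: less_divide_eq less_imp_le\<close>)
qed

lemma eventually_cost_large:
  assumes lim: "\<And>r. \<forall>\<^sub>F x in F. ce x / cb x > r" and s: "s > 0"
  shows "\<forall>\<^sub>F M in F. ce (M * s) > K * cb M"
proof -
  define r where "r = 2 * (\<bar>K\<bar> + 1) / rv_limit s"
  have pos: "rv_limit s > 0" "r > 0" using rv_limit_pos[OF s] by (auto simp: r_def)
  have "\<forall>\<^sub>F M in F. ce (M * s) / cb (M * s) > r"
    by (rule eventually_compose_filterlim[OF lim filterlim_scale[OF s]])
  moreover have "\<forall>\<^sub>F M in F. cb (M * s) / cb M > rv_limit s / 2"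
    by (rule order_tendstoD(1)[OF tendsto_rv_limit[OF s]]) (use pos in simp)
  ultimately show ?thesis
    using eventually_pos
  proof eventually_elim
    case (elim M)
    have cb: "cb M > 0" "cb (M * s) > 0" using benchmark_pos elim s by auto
    have "ce (M * s) = (ce (M * s) / cb (M * s)) * (cb (M * s) / cb M) * cb M"
      using cb by simp
    also have "\<dots> > r * (rv_limit s / 2) * cb M"
      using elim cb pos by (intro mult_strict_right_mono mult_strict_mono) auto
    also have "r * (rv_limit s / 2) = \<bar>K\<bar> + 1" using pos by (simp add: r_def)
    finally show ?case using cb mult_right_mono[of K "\<bar>K\<bar> + 1" "cb M"] by linarith
  qed
qed

lemma beckmann_ratio_tendsto:
  assumes mono: "mono_on {0..} ce" and nonneg: "\<And>x. 0 \<le> x \<Longrightarrow> 0 \<le> ce x"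
    and lim: "((\<lambda>x. ce x / cb x) \<longlongrightarrow> a) F" and a: "a > 0"
  shows "((\<lambda>z. integral {0..z} ce / (z * ce z)) \<longlongrightarrow> kappa) F"
proof -
  define G where "G = (\<lambda>z u. ce (z * u) / ce z)"
  have pointwise: "((\<lambda>z. G z u) \<longlongrightarrow> rv_limit u) F" if u: "u > 0" for u
  proof -
    have "((\<lambda>z. (ce (z * u) / cb z) / (ce z / cb z)) \<longlongrightarrow> (a * rv_limit u) / a) F"
      by (intro tendsto_divide ratio_scaled_tendsto[OF lim u] lim) (use a in auto)
    moreover have "\<forall>\<^sub>F z in F. (ce (z * u) / cb z) / (ce z / cb z) = G z u"
      using eventually_benchmark_pos by eventually_elim (simp add: G_def)
    ultimately show ?thesis using a by (simp add: Lim_transform_eventually)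
  qed
  have ev: "\<forall>\<^sub>F z in F. mono_on {0..1} (G z) \<and> (\<forall>u\<in>{0..1}. 0 \<le> G z u)
      \<and> integral {0..z} ce / (z * ce z) = integral {0..1} (G z)"
    using eventually_cost_pos[OF lim a]
  proof eventually_elim
    case (elim z)
    have "mono_on {0..1} (G z)"
    proof (rule mono_onI)
      fix r s :: real assume "r \<in> {0..1}" "s \<in> {0..1}" "r \<le> s"
      then have "ce (z * r) \<le> ce (z * s)"
        using elim by (intro mono_onD[OF mono]) (auto intro: mult_left_mono)
      then show "G z r \<le> G z s" using elim by (simp add: G_def divide_right_mono)
    qed
    moreover have "\<forall>u\<in>{0..1}. 0 \<le> G z u" using elim nonneg by (simp add: G_def)
    moreover have "integral {0..z} ce / (z * ce z) = integral {0..1} (G z)"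
      using integral_rescale_unit[of z ce] elim by (simp add: G_def)
    ultimately show ?case by blast
  qed
  have "((\<lambda>z. integral {0..1} (G z)) \<longlongrightarrow> kappa) F"
    unfolding kappa_def
    by (rule integral_tendsto_mono_on[OF _ rv_limit_mono_unit rv_limit_nonneg pointwise])
       (use ev in \<open>auto elim: eventually_mono\<close>)
  then show ?thesis
    by (rule Lim_transform_eventually) (use ev in \<open>auto elim: eventually_mono\<close>)
qed

lemma integral_kappa_error_le:
  assumes mono: "mono_on {0..} ce" and nonneg: "\<And>x. 0 \<le> x \<Longrightarrow> 0 \<le> ce x" and z: "0 \<le> z"
  shows "\<bar>integral {0..z} ce - kappa * z * ce z\<bar> \<le> z * ce z"
proof -
  have "ce 0 * z \<le> integral {0..z} ce" "integral {0..z} ce \<le> ce z * z"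
    using mono_on_integral_bounds[OF mono_on_subset[OF mono] z] by auto
  moreover have "0 \<le> ce 0 * z" "0 \<le> z * ce z" using nonneg z by auto
  moreover have "kappa * z * ce z \<le> z * ce z" "0 \<le> kappa * z * ce z"
    using mult_right_mono[OF kappa_le_one \<open>0 \<le> z * ce z\<close>] kappa_pos \<open>0 \<le> z * ce z\<close>
    by (simp_all add: mult.assoc)
  ultimately show ?thesis by (simp add: abs_le_iff mult.commute)
qed

text \<open>Above \<open>\<delta> M\<close> the ratio of \<open>integral {0..z} ce\<close> to \<open>z * ce z\<close> is already close to
  \<open>kappa\<close>; below it both terms are at most \<open>\<delta> M ce M\<close>.\<close>

lemma integral_approx_kappa_rel:
  assumes mono: "mono_on {0..} ce" and nonneg: "\<And>x. 0 \<le> x \<Longrightarrow> 0 \<le> ce x"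
    and lim: "((\<lambda>x. ce x / cb x) \<longlongrightarrow> a) F" and a: "a > 0" and \<delta>: "\<delta> > 0"
  shows "\<forall>\<^sub>F M in F. \<forall>z. 0 \<le> z \<and> z \<le> M \<longrightarrow> \<bar>integral {0..z} ce - kappa * z * ce z\<bar> \<le> \<delta> * (M * ce M)"
proof -
  have "\<forall>\<^sub>F z in F. dist (integral {0..z} ce / (z * ce z)) kappa < \<delta>"
    using beckmann_ratio_tendsto[OF mono nonneg lim a] \<delta> by (rule tendstoD)
  with eventually_cost_pos[OF lim a]
  have "\<forall>\<^sub>F z in F. z > 0 \<and> ce z > 0 \<and> \<bar>integral {0..z} ce / (z * ce z) - kappa\<bar> < \<delta>"
    by eventually_elim (auto simp: dist_real_def)
  then have "\<forall>\<^sub>F M in F. \<forall>z. min 1 \<delta> * M \<le> z \<and> z \<le> M \<longrightarrow>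
      z > 0 \<and> ce z > 0 \<and> \<bar>integral {0..z} ce / (z * ce z) - kappa\<bar> < \<delta>"
    by (rule eventually_interval) (use \<delta> in auto)
  with eventually_pos show ?thesis
  proof eventually_elim
    case (elim M)
    show ?case
    proof (intro allI impI)
      fix z assume z: "0 \<le> z \<and> z \<le> M"
      have "ce z \<le> ce M" using z by (intro mono_onD[OF mono]) auto
      show "\<bar>integral {0..z} ce - kappa * z * ce z\<bar> \<le> \<delta> * (M * ce M)"
      proof (cases "min 1 \<delta> * M \<le> z")
        case True
        then have zc: "z > 0" "ce z > 0" and close: "\<bar>integral {0..z} ce / (z * ce z) - kappa\<bar> < \<delta>"
          using elim z by auto
        have "integral {0..z} ce - kappa * z * ce z
            = z * ce z * (integral {0..z} ce / (z * ce z) - kappa)"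
          using zc by (simp add: field_simps)
        then have "\<bar>integral {0..z} ce - kappa * z * ce z\<bar>
            = z * ce z * \<bar>integral {0..z} ce / (z * ce z) - kappa\<bar>"
          using zc by (simp add: abs_mult)
        also have "\<dots> \<le> z * ce z * \<delta>" using close zc by (intro mult_left_mono) auto
        also have "\<dots> \<le> M * ce M * \<delta>"
          using z zc \<open>ce z \<le> ce M\<close> \<delta> by (intro mult_right_mono mult_mono) auto
        finally show ?thesis by (simp add: mult.commute)
      next
        case False
        have "min 1 \<delta> * M \<le> \<delta> * M" using elim by (intro mult_right_mono) auto
        then have "z \<le> \<delta> * M" using False by linarith
        have "\<bar>integral {0..z} ce - kappa * z * ce z\<bar> \<le> z * ce z"
          using z by (intro integral_kappa_error_le[OF mono nonneg]) auto
        also have "\<dots> \<le> (\<delta> * M) * ce M"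
          using \<open>z \<le> \<delta> * M\<close> \<open>ce z \<le> ce M\<close> nonneg[of z] z \<delta> by (intro mult_mono) auto
        finally show ?thesis by (simp add: mult.assoc)
      qed
    qed
  qed
qed

lemma integral_approx_kappa:
  assumes mono: "mono_on {0..} ce" and nonneg: "\<And>x. 0 \<le> x \<Longrightarrow> 0 \<le> ce x"
    and lim: "((\<lambda>x. ce x / cb x) \<longlongrightarrow> a) F" and a: "a > 0" and \<epsilon>: "\<epsilon> > 0"
  shows "\<forall>\<^sub>F M in F. \<forall>z. 0 \<le> z \<and> z \<le> M \<longrightarrow> \<bar>integral {0..z} ce - kappa * z * ce z\<bar> \<le> \<epsilon> * M * cb M"
proof -
  have "\<epsilon> / (a + 1) > 0" using \<epsilon> a by simp
  have rel: "\<forall>\<^sub>F M in F. \<forall>z. 0 \<le> z \<and> z \<le> M \<longrightarrow>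
      \<bar>integral {0..z} ce - kappa * z * ce z\<bar> \<le> \<epsilon> / (a + 1) * (M * ce M)"
    using mono nonneg lim a \<open>\<epsilon> / (a + 1) > 0\<close> by (rule integral_approx_kappa_rel)
  from rel eventually_cost_le[OF lim less_add_one] eventually_pos
  show ?thesis
  proof eventually_elim
    case (elim M)
    have "\<epsilon> / (a + 1) * (M * ce M) \<le> \<epsilon> / (a + 1) * (M * ((a + 1) * cb M))"
      using elim \<epsilon> a by (intro mult_left_mono) auto
    also have "\<dots> = \<epsilon> * M * cb M" using a by (simp add: field_simps)
    finally show ?case using elim by (meson order_trans)
  qed
qed

end

section \<open>Rerouting\<close>

context routing_net
begin

definition bad_flow :: "('p \<Rightarrow> bool) \<Rightarrow> ('p \<Rightarrow> real) \<Rightarrow> 'i \<Rightarrow> real" where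
  "bad_flow bad g i = (\<Sum>p\<in>{p\<in>P. od p = i \<and> bad p}. g p)"

definition reroute :: "('i \<Rightarrow> 'p) \<Rightarrow> ('p \<Rightarrow> bool) \<Rightarrow> ('p \<Rightarrow> real) \<Rightarrow> 'p \<Rightarrow> real" where
  "reroute r bad g p = (if bad p then 0 else g p) + (\<Sum>i\<in>I. if p = r i then bad_flow bad g i else 0)"

lemma bad_flow_eq: "bad_flow bad g i = (\<Sum>p\<in>{p\<in>P. od p = i}. if bad p then g p else 0)"
proof -
  have "(\<Sum>p\<in>{p\<in>P. od p = i}. if bad p then g p else 0) = (\<Sum>p\<in>{p\<in>{p\<in>P. od p = i}. bad p}. g p)"
    by (rule sum.inter_filter[symmetric]) (use finite_P in auto)
  also have "{p\<in>{p\<in>P. od p = i}. bad p} = {p\<in>P. od p = i \<and> bad p}" by auto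
  finally show ?thesis by (simp add: bad_flow_def)
qed

lemma bad_flow_nonneg: "feas m g \<Longrightarrow> 0 \<le> bad_flow bad g i"
  unfolding bad_flow_def by (auto intro: sum_nonneg feasible_nonneg)

lemma sum_bad_flow: "(\<Sum>i\<in>I. bad_flow bad g i) = (\<Sum>p\<in>{p\<in>P. bad p}. g p)"
  unfolding bad_flow_eq sum_over_od_pairs by (rule sum.inter_filter[OF finite_P, symmetric])

context
  fixes r :: "'i \<Rightarrow> 'p"
  assumes r: "\<And>i. i \<in> I \<Longrightarrow> r i \<in> P \<and> od (r i) = i"
begin

lemma reroute_feasible:
  assumes g: "feas m g"
  shows "feas m (reroute r bad g)"
  unfolding feasible_flow_def
proof safe
  fix p assume "p \<in> P"
  then show "0 \<le> reroute r bad g p"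
    unfolding reroute_def using feasible_nonneg[OF g] bad_flow_nonneg[OF g]
    by (auto intro!: sum_nonneg add_nonneg_nonneg)
next
  fix j assume j: "j \<in> I"
  let ?Q = "{p\<in>P. od p = j}"
  have "(\<Sum>p\<in>?Q. g p) = (\<Sum>p\<in>?Q. if bad p then 0 else g p) + (\<Sum>p\<in>?Q. if bad p then g p else 0)"
    by (subst sum.distrib[symmetric]) (auto intro: sum.cong)
  then have "(\<Sum>p\<in>?Q. if bad p then 0 else g p) = m j - bad_flow bad g j"
    using g j by (simp add: bad_flow_eq feasible_flow_def)
  moreover have "(\<Sum>p\<in>?Q. \<Sum>i\<in>I. if p = r i then bad_flow bad g i else 0) = bad_flow bad g j"
  proof -
    have "(\<Sum>p\<in>?Q. \<Sum>i\<in>I. if p = r i then bad_flow bad g i else 0)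
        = (\<Sum>i\<in>I. \<Sum>p\<in>?Q. if p = r i then bad_flow bad g i else 0)"
      by (rule sum.swap)
    also have "\<dots> = (\<Sum>i\<in>I. if i = j then bad_flow bad g i else 0)"
      by (rule sum.cong[OF refl]) (use r finite_P in \<open>auto simp: sum.delta\<close>)
    also have "\<dots> = bad_flow bad g j" using j finite_I by simp
    finally show ?thesis .
  qed
  ultimately show "(\<Sum>p\<in>?Q. reroute r bad g p) = m j"
    by (simp add: reroute_def sum.distrib)
qed

lemma load_reroute:
  "ld (reroute r bad g) e = (\<Sum>p\<in>{p\<in>P. e \<in> set (pe p)}. if bad p then 0 else g p)
     + (\<Sum>i\<in>I. if e \<in> set (pe (r i)) then bad_flow bad g i else 0)"
proof -
  let ?Pe = "{p\<in>P. e \<in> set (pe p)}"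
  have "(\<Sum>p\<in>?Pe. \<Sum>i\<in>I. if p = r i then bad_flow bad g i else 0)
      = (\<Sum>i\<in>I. \<Sum>p\<in>?Pe. if p = r i then bad_flow bad g i else 0)"
    by (rule sum.swap)
  also have "\<dots> = (\<Sum>i\<in>I. if e \<in> set (pe (r i)) then bad_flow bad g i else 0)"
    by (rule sum.cong[OF refl]) (use r finite_P in \<open>auto simp: sum.delta\<close>)
  finally show ?thesis
    unfolding load_def reroute_def sum.distrib by simp
qed

lemma load_reroute_le:
  assumes g: "feas m g"
  shows "ld (reroute r bad g) e \<le> ld g e + (\<Sum>p\<in>{p\<in>P. bad p}. g p)"
proof -
  have "(\<Sum>p\<in>{p\<in>P. e \<in> set (pe p)}. if bad p then 0 else g p) \<le> ld g e"
    unfolding load_def by (rule sum_mono) (use feasible_nonneg[OF g] in auto)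
  moreover have "(\<Sum>i\<in>I. if e \<in> set (pe (r i)) then bad_flow bad g i else 0) \<le> (\<Sum>i\<in>I. bad_flow bad g i)"
    by (rule sum_mono) (use bad_flow_nonneg[OF g] in auto)
  ultimately show ?thesis by (simp add: load_reroute sum_bad_flow)
qed

context
  fixes e assumes off: "\<forall>i\<in>I. e \<notin> set (pe (r i))"
begin

lemma load_reroute_off:
  "ld (reroute r bad g) e = (\<Sum>p\<in>{p\<in>P. e \<in> set (pe p)}. if bad p then 0 else g p)"
  using off by (simp add: load_reroute)

lemma load_reroute_le_off:
  assumes "feas m g"
  shows "ld (reroute r bad g) e \<le> ld g e"
proof -
  have "(\<Sum>p\<in>{p\<in>P. e \<in> set (pe p)}. if bad p then 0 else g p) \<le> ld g e"
    unfolding load_def by (rule sum_mono) (use assms in \<open>auto intro: feasible_nonneg\<close>)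
  then show ?thesis by (simp only: load_reroute_off)
qed

lemma load_reroute_pos_off:
  assumes "ld (reroute r bad g) e > 0"
  obtains p where "p \<in> P" "e \<in> set (pe p)" "\<not> bad p"
proof -
  have "\<not> (\<forall>p\<in>{p\<in>P. e \<in> set (pe p)}. (if bad p then 0 else g p) = 0)"
    using assms sum.neutral[of "{p\<in>P. e \<in> set (pe p)}" "\<lambda>p. if bad p then 0 else g p"]
    by (force simp: load_reroute_off)
  then show ?thesis using that by (auto split: if_splits)
qed

end

end

lemma heavy_paths_flow_le:
  assumes g: "feas m g" and L: "L > 0"
  shows "(\<Sum>p\<in>{p\<in>P. \<exists>e\<in>set (pe p). c e (ld g e) > L}. g p) * L \<le> SC g"
proof -
  let ?B = "{e\<in>E. c e (ld g e) > L}"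
  have "(\<Sum>p\<in>{p\<in>P. \<exists>e\<in>set (pe p). c e (ld g e) > L}. g p)
      \<le> (\<Sum>p\<in>P. \<Sum>e\<in>?B. if e \<in> set (pe p) then g p else 0)"
    unfolding sum.inter_filter[OF finite_P, of g "\<lambda>p. \<exists>e\<in>set (pe p). c e (ld g e) > L"]
  proof (rule sum_mono)
    fix p assume p: "p \<in> P"
    show "(if \<exists>e\<in>set (pe p). c e (ld g e) > L then g p else 0)
        \<le> (\<Sum>e\<in>?B. if e \<in> set (pe p) then g p else 0)"
    proof (cases "\<exists>e\<in>set (pe p). c e (ld g e) > L")
      case True
      then obtain e where e: "e \<in> set (pe p)" "c e (ld g e) > L" by auto
      then have "e \<in> ?B" using path_edges[OF p] by auto
      then have "(if e \<in> set (pe p) then g p else 0) \<le> (\<Sum>e\<in>?B. if e \<in> set (pe p) then g p else 0)"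
        by (rule member_le_sum) (use feasible_nonneg[OF g p] finite_E in auto)
      then show ?thesis using True e by simp
    qed (use feasible_nonneg[OF g p] in \<open>auto intro: sum_nonneg\<close>)
  qed
  also have "\<dots> = (\<Sum>e\<in>?B. ld g e)"
    by (subst sum.swap) (simp add: load_def sum.inter_filter[OF finite_P])
  finally have "(\<Sum>p\<in>{p\<in>P. \<exists>e\<in>set (pe p). c e (ld g e) > L}. g p) * L \<le> (\<Sum>e\<in>?B. ld g e) * L"
    using L by (simp add: mult_right_mono)
  also have "\<dots> \<le> (\<Sum>e\<in>?B. ld g e * c e (ld g e))"
    unfolding sum_distrib_right
    by (rule sum_mono) (use load_nonneg[OF g] in \<open>auto intro: mult_left_mono\<close>)
  also have "\<dots> \<le> SC g"
    unfolding social_cost_def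
    by (rule sum_mono2[OF finite_E]) (use load_nonneg[OF g] cost_nonneg in auto)
  finally show ?thesis .
qed

end

section \<open>Tight networks\<close>

lemma eventually_uniform_lower_bound:
  fixes a :: "'e \<Rightarrow> 'a \<Rightarrow> real"
  assumes "finite S" and b: "\<forall>\<^sub>F M in F. 0 \<le> b M"
    and each: "\<And>e. e \<in> S \<Longrightarrow> \<exists>\<gamma>>0. \<forall>\<^sub>F M in F. \<gamma> * b M \<le> a e M"
  shows "\<exists>\<gamma>>0. \<forall>\<^sub>F M in F. \<forall>e\<in>S. \<gamma> * b M \<le> a e M"
  using assms(1) each
proof (induction S rule: finite_induct)
  case empty then show ?case by (intro exI[of _ 1]) auto
next
  case (insert x S)
  obtain \<gamma>1 where \<gamma>1: "\<gamma>1 > 0" "\<forall>\<^sub>F M in F. \<forall>e\<in>S. \<gamma>1 * b M \<le> a e M" using insert by auto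
  obtain \<gamma>2 where \<gamma>2: "\<gamma>2 > 0" "\<forall>\<^sub>F M in F. \<gamma>2 * b M \<le> a x M" using insert by auto
  have "\<forall>\<^sub>F M in F. \<forall>e\<in>insert x S. min \<gamma>1 \<gamma>2 * b M \<le> a e M"
    using \<gamma>1(2) \<gamma>2(2) b
  proof eventually_elim
    case (elim M)
    have "min \<gamma>1 \<gamma>2 * b M \<le> \<gamma>1 * b M" "min \<gamma>1 \<gamma>2 * b M \<le> \<gamma>2 * b M"
      using elim by (auto intro: mult_right_mono)
    then show ?case using elim by force
  qed
  then show ?case using \<gamma>1(1) \<gamma>2(1) by (intro exI[of _ "min \<gamma>1 \<gamma>2"]) auto
qed

definition ratio_limit :: "real filter \<Rightarrow> ('e \<Rightarrow> real \<Rightarrow> real) \<Rightarrow> (real \<Rightarrow> real) \<Rightarrow> 'e \<Rightarrow> ereal" where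
  "ratio_limit F c cb e = Lim F (\<lambda>x. ereal (c e x / cb x))"

locale tight_routing = routing_net E I P od pe c + regular_benchmark F cb
  for E :: "'e set" and I :: "'i set" and P :: "'p set" and od pe c F cb +
  assumes ratio_converges: "\<And>e. e \<in> E \<Longrightarrow> \<exists>a::ereal. a \<ge> 0 \<and> ((\<lambda>x. ereal (c e x / cb x)) \<longlongrightarrow> a) F"
    and tight: "\<And>i. i \<in> I \<Longrightarrow>
      0 < (INF p\<in>{p\<in>P. od p = i}. SUP e\<in>set (pe p). ratio_limit F c cb e) \<and>
      (INF p\<in>{p\<in>P. od p = i}. SUP e\<in>set (pe p). ratio_limit F c cb e) < \<infinity>"
begin

abbreviation alpha :: "'e \<Rightarrow> ereal" where
  "alpha e \<equiv> ratio_limit F c cb e"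

definition alpha_real :: "'e \<Rightarrow> real" where
  "alpha_real e = real_of_ereal (alpha e)"

definition fin_edges :: "'e set" where
  "fin_edges = {e\<in>E. alpha e \<noteq> \<infinity>}"

definition inf_edges :: "'e set" where
  "inf_edges = {e\<in>E. alpha e = \<infinity>}"

text \<open>\<open>K * cb M\<close> bounds the cost of every path avoiding \<open>inf_edges\<close> at total demand \<open>M\<close>.\<close>

definition K :: real where
  "K = (\<Sum>e\<in>fin_edges. alpha_real e + 1)"

definition tight_path :: "'i \<Rightarrow> 'p" where
  "tight_path i = (SOME p. p \<in> P \<and> od p = i \<and> (\<forall>e\<in>set (pe p). alpha e \<noteq> \<infinity>))"

lemma alpha_tendsto: "e \<in> E \<Longrightarrow> ((\<lambda>x. ereal (c e x / cb x)) \<longlongrightarrow> alpha e) F \<and> alpha e \<ge> 0"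
  using ratio_converges tendsto_Lim[OF F_proper] by (fastforce simp: ratio_limit_def)

lemma fin_edge_tendsto:
  assumes "e \<in> fin_edges"
  shows "((\<lambda>x. c e x / cb x) \<longlongrightarrow> alpha_real e) F" and "alpha e = ereal (alpha_real e)"
    and "0 \<le> alpha_real e"
proof -
  have "alpha e \<noteq> \<infinity>" "((\<lambda>x. ereal (c e x / cb x)) \<longlongrightarrow> alpha e) F" "alpha e \<ge> 0"
    using assms alpha_tendsto by (auto simp: fin_edges_def)
  moreover from this show eq: "alpha e = ereal (alpha_real e)"
    unfolding alpha_real_def by (cases "alpha e") auto
  ultimately show "((\<lambda>x. c e x / cb x) \<longlongrightarrow> alpha_real e) F" "0 \<le> alpha_real e"
    by (simp_all add: eq)
qed

lemma inf_edge_unbounded: "e \<in> inf_edges \<Longrightarrow> \<forall>\<^sub>F x in F. c e x / cb x > r"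
  using alpha_tendsto[of e] by (auto simp: inf_edges_def tendsto_PInfty)

lemma edges_split: "e \<in> E \<Longrightarrow> e \<in> fin_edges \<or> e \<in> inf_edges"
  by (auto simp: fin_edges_def inf_edges_def)

lemma finite_fin_edges: "finite fin_edges" and finite_inf_edges: "finite inf_edges"
  using finite_E by (simp_all add: fin_edges_def inf_edges_def)

lemma alpha_real_le_K: "e \<in> fin_edges \<Longrightarrow> alpha_real e + 1 \<le> K"
  unfolding K_def
  by (rule member_le_sum) (use fin_edge_tendsto(3) finite_fin_edges in auto)

lemma K_nonneg: "0 \<le> K"
  unfolding K_def using fin_edge_tendsto(3) by (auto intro: sum_nonneg add_nonneg_nonneg)

lemma tight_path: "i \<in> I \<Longrightarrow> tight_path i \<in> P \<and> od (tight_path i) = i"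
  and tight_path_fin_edges: "i \<in> I \<Longrightarrow> set (pe (tight_path i)) \<subseteq> fin_edges"
proof -
  assume i: "i \<in> I"
  then have "\<exists>p\<in>{p\<in>P. od p = i}. (SUP e\<in>set (pe p). alpha e) < \<infinity>"
    using tight[OF i] by (simp only: INF_less_iff)
  then obtain p where p: "p \<in> P" "od p = i" "(SUP e\<in>set (pe p). alpha e) < \<infinity>" by blast
  have "alpha e \<noteq> \<infinity>" if "e \<in> set (pe p)" for e
    using le_less_trans[OF SUP_upper[OF that] p(3)] by auto
  with p have "\<exists>p. p \<in> P \<and> od p = i \<and> (\<forall>e\<in>set (pe p). alpha e \<noteq> \<infinity>)" by blast
  then have "tight_path i \<in> P \<and> od (tight_path i) = i \<and> (\<forall>e\<in>set (pe (tight_path i)). alpha e \<noteq> \<infinity>)"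
    unfolding tight_path_def by (rule someI_ex)
  then show "tight_path i \<in> P \<and> od (tight_path i) = i" "set (pe (tight_path i)) \<subseteq> fin_edges"
    using path_edges by (auto simp: fin_edges_def)
qed

lemma path_has_pos_edge:
  assumes p: "p \<in> P"
  obtains e where "e \<in> set (pe p)" "alpha e > 0"
proof -
  have "0 < (INF q\<in>{q\<in>P. od q = od p}. SUP e\<in>set (pe q). alpha e)"
    using tight od_in_I p by auto
  also have "\<dots> \<le> (SUP e\<in>set (pe p). alpha e)" by (rule INF_lower) (use p in auto)
  finally show ?thesis using that by (auto simp: less_SUP_iff)
qed

lemma eventually_pos_edge_cost_ge:
  assumes \<beta>: "\<beta> > 0"
  shows "\<exists>\<gamma>>0. \<forall>\<^sub>F M in F. \<forall>e\<in>{e\<in>E. alpha e > 0}. \<gamma> * cb M \<le> c e (M * \<beta>)"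
proof (rule eventually_uniform_lower_bound)
  show "finite {e\<in>E. alpha e > 0}" using finite_E by simp
  show "\<forall>\<^sub>F M in F. 0 \<le> cb M" using eventually_benchmark_pos by (auto elim: eventually_mono)
  fix e assume e: "e \<in> {e\<in>E. alpha e > 0}"
  show "\<exists>\<gamma>>0. \<forall>\<^sub>F M in F. \<gamma> * cb M \<le> c e (M * \<beta>)"
  proof (cases "e \<in> fin_edges")
    case True
    then have "alpha_real e > 0" using e fin_edge_tendsto(2) by auto
    then show ?thesis using eventually_cost_ge[OF fin_edge_tendsto(1)[OF True] _ \<beta>] rv_limit_pos[OF \<beta>]
      by (intro exI[of _ "alpha_real e * rv_limit \<beta> / 2"]) auto
  next
    case False
    then have "e \<in> inf_edges" using edges_split e by auto
    then have "\<forall>\<^sub>F M in F. 1 * cb M < c e (M * \<beta>)"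
      by (rule eventually_cost_large[OF inf_edge_unbounded \<beta>])
    then show ?thesis by (intro exI[of _ 1]) (auto elim: eventually_mono)
  qed
qed

text \<open>Some path carries at least \<open>\<beta> M\<close>, and by tightness it has an edge with \<open>\<alpha>\<^sub>e > 0\<close>.\<close>

lemma social_cost_lower_bound:
  assumes I: "I \<noteq> {}"
  shows "\<exists>\<delta>>0. \<forall>\<^sub>F M in F. \<forall>m g. (\<Sum>i\<in>I. m i) = M \<longrightarrow> feas m g \<longrightarrow> \<delta> * (M * cb M) \<le> SC g"
proof -
  define \<beta> where "\<beta> = 1 / (real (card I) * real (card P))"
  have "P \<noteq> {}" using I od_has_path by blast
  then have \<beta>: "\<beta> > 0" using I finite_I finite_P by (simp add: \<beta>_def card_gt_0_iff)
  obtain \<gamma> where \<gamma>: "\<gamma> > 0" "\<forall>\<^sub>F M in F. \<forall>e\<in>{e\<in>E. alpha e > 0}. \<gamma> * cb M \<le> c e (M * \<beta>)"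
    using eventually_pos_edge_cost_ge[OF \<beta>] by blast
  have "\<forall>\<^sub>F M in F. \<forall>m g. (\<Sum>i\<in>I. m i) = M \<longrightarrow> feas m g \<longrightarrow> \<beta> * \<gamma> * (M * cb M) \<le> SC g"
    using \<gamma>(2) eventually_pos
  proof eventually_elim
    case (elim M)
    show ?case
    proof (intro allI impI)
      fix m g assume total: "(\<Sum>i\<in>I. m i) = M" and g: "feas m g"
      obtain p where p: "p \<in> P" "M * \<beta> \<le> g p"
        using exists_path_flow_ge[OF I g] total by (auto simp: \<beta>_def)
      obtain e where e: "e \<in> set (pe p)" "alpha e > 0" using path_has_pos_edge[OF p(1)] .
      have eE: "e \<in> E" using path_edges p e by auto
      have load: "M * \<beta> \<le> ld g e" using p(2) path_flow_le_load[OF g p(1) e(1)] by linarith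
      have Mb: "0 \<le> M * \<beta>" using elim \<beta> by simp
      have "\<beta> * \<gamma> * (M * cb M) = (M * \<beta>) * (\<gamma> * cb M)" by (simp add: algebra_simps)
      also have "\<dots> \<le> ld g e * c e (ld g e)"
        using load elim eE e(2) \<gamma>(1) Mb benchmark_pos[of M] cost_mono[OF eE Mb load]
        by (intro mult_mono) force+
      also have "\<dots> \<le> SC g" by (rule edge_cost_le_social_cost[OF g eE])
      finally show "\<beta> * \<gamma> * (M * cb M) \<le> SC g" .
    qed
  qed
  then show ?thesis using \<beta> \<gamma>(1) by (intro exI[of _ "\<beta> * \<gamma>"]) auto
qed

end

text \<open>The estimates that hold eventually along \<open>F\<close>, frozen at one total demand \<open>M\<close>.\<close>

locale tight_routing_scale = tight_routing E I P od pe c F cb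
  for E :: "'e set" and I :: "'i set" and P :: "'p set" and od pe c F cb +
  fixes M \<eta>1 \<eta>2 \<eta>3 L :: real
  assumes M_pos: "M > 0"
    and params: "0 \<le> \<eta>1" "0 \<le> \<eta>2" "0 \<le> \<eta>3" "0 < L"
    and fin_cost_le: "\<And>e. e \<in> fin_edges \<Longrightarrow> c e M \<le> (alpha_real e + 1) * cb M"
    and pos_beckmann_approx: "\<And>e z. e \<in> fin_edges \<Longrightarrow> alpha_real e > 0 \<Longrightarrow> 0 \<le> z \<Longrightarrow> z \<le> M \<Longrightarrow>
          \<bar>beckmann e z - kappa * z * c e z\<bar> \<le> \<eta>1 * M * cb M"
    and zero_cost_small: "\<And>e. e \<in> fin_edges \<Longrightarrow> alpha_real e = 0 \<Longrightarrow> c e M \<le> \<eta>1 * cb M"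
    and inf_cost_large: "\<And>e. e \<in> inf_edges \<Longrightarrow> c e (M * \<eta>2) > K * cb M"
    and inf_cost_huge: "\<And>e. e \<in> inf_edges \<Longrightarrow> c e (M * \<eta>3) > L * cb M"
begin

lemma cb_M_pos: "cb M > 0"
  using benchmark_pos M_pos by simp

lemma kappa_bounds: "0 < kappa" "kappa \<le> 1"
  using kappa_pos kappa_le_one by auto

lemma fin_cost_le_K:
  assumes e: "e \<in> fin_edges" and z: "0 \<le> z" "z \<le> M"
  shows "c e z \<le> K * cb M"
proof -
  have "c e z \<le> c e M" using e z by (intro cost_mono) (auto simp: fin_edges_def)
  also have "\<dots> \<le> (alpha_real e + 1) * cb M" by (rule fin_cost_le[OF e])
  also have "\<dots> \<le> K * cb M" using alpha_real_le_K[OF e] cb_M_pos by (intro mult_right_mono) auto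
  finally show ?thesis .
qed

lemma fin_beckmann_approx:
  assumes e: "e \<in> fin_edges" and z: "0 \<le> z" "z \<le> M"
  shows "\<bar>beckmann e z - kappa * z * c e z\<bar> \<le> \<eta>1 * M * cb M"
proof (cases "alpha_real e > 0")
  case True then show ?thesis by (rule pos_beckmann_approx[OF e _ z])
next
  case False
  then have "alpha_real e = 0" using fin_edge_tendsto(3)[OF e] by simp
  have eE: "e \<in> E" using e by (simp add: fin_edges_def)
  have "z * c e z \<le> M * c e M"
    using z cost_mono[OF eE z] cost_nonneg[OF eE z(1)] by (intro mult_mono) auto
  also have "\<dots> \<le> \<eta>1 * M * cb M" using zero_cost_small[OF e \<open>alpha_real e = 0\<close>] M_pos by simp
  finally have "z * c e z \<le> \<eta>1 * M * cb M" .
  moreover have "0 \<le> beckmann e z" "beckmann e z \<le> z * c e z"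
    using beckmann_nonneg[OF eE z(1)] beckmann_le[OF eE z(1)] by auto
  moreover have "0 \<le> kappa * z * c e z" "kappa * z * c e z \<le> z * c e z"
    using kappa_bounds z cost_nonneg[OF eE z(1)] mult_right_mono[of kappa 1 "z * c e z"]
    by (auto simp: mult.assoc)
  ultimately show ?thesis by linarith
qed

lemma cheap_inf_edge_load_lt:
  assumes e: "e \<in> inf_edges" and "0 \<le> z" "c e z \<le> C * cb M" and expensive: "c e (M * \<eta>) > C * cb M"
    and "0 \<le> \<eta>"
  shows "z < M * \<eta>"
proof (rule ccontr)
  assume "\<not> z < M * \<eta>"
  then have "c e (M * \<eta>) \<le> c e z"
    using e M_pos assms(5) by (intro cost_mono) (auto simp: inf_edges_def)
  then show False using assms(3) expensive by simp
qed

context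
  fixes m :: "'i \<Rightarrow> real"
  assumes total: "(\<Sum>i\<in>I. m i) = M"
begin

lemma load_bounds: "feas m g \<Longrightarrow> 0 \<le> ld g e \<and> ld g e \<le> M"
  using load_nonneg load_le_total total by auto

lemma wardrop_path_cost_le:
  assumes f: "wardrop m f" and p: "p \<in> P" "f p > 0"
  shows "pc f p \<le> K * cb M"
proof -
  have ff: "feas m f" using f by (simp add: wardrop_eq_def)
  define q where "q = tight_path (od p)"
  have q: "q \<in> P" "od q = od p" "set (pe q) \<subseteq> fin_edges"
    using tight_path tight_path_fin_edges od_in_I p by (auto simp: q_def)
  have "pc f p \<le> pc f q" using f p q by (auto simp: wardrop_eq_def)
  also have "\<dots> \<le> (\<Sum>e\<in>set (pe q). (alpha_real e + 1) * cb M)"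
    unfolding path_cost_def
  proof (rule sum_mono)
    fix e assume e: "e \<in> set (pe q)"
    then have "c e (ld f e) \<le> c e M"
      using q load_bounds[OF ff] by (intro cost_mono) (auto simp: fin_edges_def)
    then show "c e (ld f e) \<le> (alpha_real e + 1) * cb M" using fin_cost_le[of e] e q by auto
  qed
  also have "\<dots> \<le> (\<Sum>e\<in>fin_edges. (alpha_real e + 1) * cb M)"
    by (rule sum_mono2[OF finite_fin_edges q(3)])
       (use fin_edge_tendsto(3) cb_M_pos in auto)
  finally show ?thesis by (simp add: K_def sum_distrib_right)
qed

lemma wardrop_social_cost_le:
  assumes f: "wardrop m f"
  shows "SC f \<le> K * (M * cb M)"
proof -
  have ff: "feas m f" using f by (simp add: wardrop_eq_def)
  have "SC f \<le> (\<Sum>p\<in>P. f p * (K * cb M))"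
    unfolding social_cost_eq_sum_paths
  proof (rule sum_mono)
    fix p assume p: "p \<in> P"
    show "f p * pc f p \<le> f p * (K * cb M)"
      using wardrop_path_cost_le[OF f p] feasible_nonneg[OF ff p]
      by (cases "f p > 0") (auto intro: mult_left_mono)
  qed
  also have "\<dots> = M * (K * cb M)"
    using feasible_total[OF ff] total by (simp add: sum_distrib_right[symmetric])
  finally show ?thesis by (simp add: mult.left_commute)
qed

text \<open>Flow on an edge with \<open>\<alpha>\<^sub>e = \<infinity>\<close> pays at most the cost of a tight path, which
  confines its load below \<open>\<eta>2 M\<close>.\<close>

lemma wardrop_inf_edge_cost_le:
  assumes f: "wardrop m f" and e: "e \<in> inf_edges"
  shows "ld f e * c e (ld f e) \<le> \<eta>2 * K * (M * cb M)"
proof (cases "ld f e > 0")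
  case True
  have ff: "feas m f" using f by (simp add: wardrop_eq_def)
  have eE: "e \<in> E" and x: "0 \<le> ld f e" using e load_bounds[OF ff] by (auto simp: inf_edges_def)
  obtain p where p: "p \<in> P" "e \<in> set (pe p)" "f p > 0"
    using load_pos_imp_used_path[OF ff True] .
  have cx: "c e (ld f e) \<le> K * cb M"
    using edge_cost_le_path_cost[OF ff p(1,2)] wardrop_path_cost_le[OF f p(1,3)] by simp
  have "ld f e < M * \<eta>2"
    by (rule cheap_inf_edge_load_lt[OF e x cx inf_cost_large[OF e] params(2)])
  then have "ld f e * c e (ld f e) \<le> (M * \<eta>2) * (K * cb M)"
    using cx x cost_nonneg[OF eE x] by (intro mult_mono) auto
  then show ?thesis by (simp add: algebra_simps)
qed (use params K_nonneg M_pos cb_M_pos load_bounds[of f e] f in \<open>auto simp: wardrop_eq_def\<close>)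

lemma social_cost_le_potential:
  assumes f: "wardrop m f"
  shows "SC f \<le> potential f / kappa
    + real (card E) * (\<eta>1 * (M * cb M) / kappa + \<eta>2 * K * (M * cb M))"
proof -
  have "ld f e * c e (ld f e) \<le> beckmann e (ld f e) / kappa + (\<eta>1 * (M * cb M) / kappa + \<eta>2 * K * (M * cb M))"
    if e: "e \<in> E" for e
  proof -
    have ff: "feas m f" using f by (simp add: wardrop_eq_def)
    have nonneg: "0 \<le> beckmann e (ld f e) / kappa" "0 \<le> \<eta>1 * (M * cb M) / kappa"
      "0 \<le> \<eta>2 * K * (M * cb M)"
      using beckmann_nonneg[OF e] load_bounds[OF ff] kappa_bounds params M_pos cb_M_pos K_nonneg
      by auto
    show ?thesis
    proof (cases "e \<in> fin_edges")
      case True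
      then have "\<bar>beckmann e (ld f e) - kappa * ld f e * c e (ld f e)\<bar> \<le> \<eta>1 * M * cb M"
        using load_bounds[OF ff] by (intro fin_beckmann_approx) auto
      then have "kappa * (ld f e * c e (ld f e)) \<le> beckmann e (ld f e) + \<eta>1 * (M * cb M)"
        by (simp add: mult.assoc)
      then have "ld f e * c e (ld f e) \<le> (beckmann e (ld f e) + \<eta>1 * (M * cb M)) / kappa"
        using kappa_bounds by (simp add: pos_le_divide_eq mult.commute)
      then show ?thesis using nonneg by (simp add: add_divide_distrib)
    next
      case False
      then show ?thesis
        using wardrop_inf_edge_cost_le[OF f] edges_split[OF e] nonneg by fastforce
    qed
  qed
  then have "SC f \<le> (\<Sum>e\<in>E. beckmann e (ld f e) / kappa
      + (\<eta>1 * (M * cb M) / kappa + \<eta>2 * K * (M * cb M)))"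
    unfolding social_cost_def by (intro sum_mono)
  then show ?thesis by (simp add: potential_def sum.distrib sum_divide_distrib)
qed

end

definition heavy :: "('p \<Rightarrow> real) \<Rightarrow> 'p \<Rightarrow> bool" where
  "heavy g p \<longleftrightarrow> (\<exists>e\<in>set (pe p). c e (ld g e) > L * cb M)"

context
  fixes m :: "'i \<Rightarrow> real"
  assumes total: "(\<Sum>i\<in>I. m i) = M"
begin

text \<open>After rerouting, flow on an edge with \<open>\<alpha>\<^sub>e = \<infinity>\<close> comes from a light path only, so
  its load lies below \<open>\<eta>3 M\<close>.\<close>

lemma rerouted_inf_edge_beckmann_le:
  assumes g: "feas m g" and e: "e \<in> inf_edges"
  shows "beckmann e (ld (reroute tight_path (heavy g) g) e) \<le> \<eta>3 * L * (M * cb M)"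
proof -
  define y' where "y' = ld (reroute tight_path (heavy g) g) e"
  have eE: "e \<in> E" using e by (simp add: inf_edges_def)
  have y': "0 \<le> y'" "y' \<le> M"
    using load_bounds[OF total reroute_feasible[OF tight_path g]] by (auto simp: y'_def)
  have off: "\<forall>i\<in>I. e \<notin> set (pe (tight_path i))"
    using tight_path_fin_edges e by (fastforce simp: fin_edges_def inf_edges_def)
  show ?thesis
  proof (cases "y' > 0")
    case True
    then obtain p where "p \<in> P" "e \<in> set (pe p)" "\<not> heavy g p"
      using load_reroute_pos_off[OF tight_path off] by (auto simp: y'_def)
    then have "c e (ld g e) \<le> L * cb M" by (auto simp: heavy_def not_less)
    moreover have "y' \<le> ld g e" using load_reroute_le_off[OF tight_path off g] by (simp add: y'_def)
    ultimately have cy': "c e y' \<le> L * cb M" using cost_mono[OF eE y'(1)] by fastforce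
    have "y' < M * \<eta>3"
      by (rule cheap_inf_edge_load_lt[OF e y'(1) cy' inf_cost_huge[OF e] params(3)])
    have "beckmann e y' \<le> y' * c e y'" by (rule beckmann_le[OF eE y'(1)])
    also have "\<dots> \<le> (M * \<eta>3) * (L * cb M)"
      using \<open>y' < M * \<eta>3\<close> cy' y' cost_nonneg[OF eE y'(1)] by (intro mult_mono) auto
    finally show ?thesis by (simp add: y'_def algebra_simps)
  qed (use y' params M_pos cb_M_pos in \<open>simp add: y'_def\<close>)
qed

lemma rerouted_beckmann_le:
  assumes g: "feas m g" and e: "e \<in> E"
  defines "R \<equiv> (\<Sum>p\<in>{p\<in>P. heavy g p}. g p)"
  shows "beckmann e (ld (reroute tight_path (heavy g) g) e)
    \<le> kappa * (ld g e * c e (ld g e)) + (\<eta>1 * (M * cb M) + R * K * cb M + \<eta>3 * L * (M * cb M))"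
proof -
  define y where "y = ld g e"
  define y' where "y' = ld (reroute tight_path (heavy g) g) e"
  have y: "0 \<le> y" "y \<le> M" using load_bounds[OF total g] by (auto simp: y_def)
  have y': "0 \<le> y'" "y' \<le> M"
    using load_bounds[OF total reroute_feasible[OF tight_path g]] by (auto simp: y'_def)
  have "0 \<le> R" unfolding R_def by (rule sum_nonneg) (auto intro: feasible_nonneg[OF g])
  then have nonneg: "0 \<le> kappa * (y * c e y)" "0 \<le> \<eta>1 * (M * cb M)" "0 \<le> R * K * cb M"
    "0 \<le> \<eta>3 * L * (M * cb M)"
    using y cost_nonneg[OF e y(1)] kappa_bounds params M_pos cb_M_pos K_nonneg by auto
  show ?thesis
  proof (cases "e \<in> fin_edges")
    case True
    have "beckmann e y' \<le> beckmann e y + R * K * cb M"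
    proof (cases "y' \<le> y")
      case True then show ?thesis using beckmann_mono[OF e y'(1)] nonneg by force
    next
      case False
      have "beckmann e y' - beckmann e y \<le> c e y' * (y' - y)"
        using beckmann_diff_bounds(2)[OF e y(1)] False by simp
      also have "\<dots> \<le> (K * cb M) * R"
      proof (rule mult_mono)
        show "c e y' \<le> K * cb M" by (rule fin_cost_le_K[OF True y'])
        show "y' - y \<le> R"
          using load_reroute_le[OF tight_path g, of "heavy g" e] by (simp add: y_def y'_def R_def)
      qed (use K_nonneg cb_M_pos False in auto)
      finally show ?thesis by (simp add: algebra_simps)
    qed
    moreover have "beckmann e y \<le> kappa * (y * c e y) + \<eta>1 * (M * cb M)"
      using fin_beckmann_approx[OF True y] by (simp add: mult.assoc)
    ultimately show ?thesis using nonneg by (simp add: y_def y'_def)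
  next
    case False
    then have "beckmann e y' \<le> \<eta>3 * L * (M * cb M)"
      using rerouted_inf_edge_beckmann_le[OF g] edges_split[OF e] by (simp add: y'_def)
    then show ?thesis using nonneg by (simp add: y_def y'_def)
  qed
qed

lemma potential_reroute_le:
  assumes g: "feas m g"
  defines "R \<equiv> (\<Sum>p\<in>{p\<in>P. heavy g p}. g p)"
  shows "potential (reroute tight_path (heavy g) g)
    \<le> kappa * SC g + real (card E) * (\<eta>1 * (M * cb M) + R * K * cb M + \<eta>3 * L * (M * cb M))"
proof -
  have "potential (reroute tight_path (heavy g) g)
      \<le> (\<Sum>e\<in>E. kappa * (ld g e * c e (ld g e)) + (\<eta>1 * (M * cb M) + R * K * cb M + \<eta>3 * L * (M * cb M)))"
    unfolding potential_def R_def by (rule sum_mono) (rule rerouted_beckmann_le[OF g])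
  then show ?thesis by (simp add: social_cost_def sum.distrib sum_distrib_left)
qed

end

text \<open>Comparing the equilibrium with the rerouted flow through the potential costs the errors
  of the edge estimates, plus the rerouted mass, which is small unless \<open>g\<close> is already
  expensive, since heavy paths carry cost at least \<open>L * cb M\<close>.\<close>

theorem wardrop_social_cost_bound:
  assumes total: "(\<Sum>i\<in>I. m i) = M" and f: "wardrop m f" and g: "feas m g"
  shows "SC f \<le> SC g + real (card E) * ((\<eta>1 * (M * cb M) + K * K * (M * cb M) / L
      + \<eta>3 * L * (M * cb M)) / kappa + \<eta>1 * (M * cb M) / kappa + \<eta>2 * K * (M * cb M))"
    (is "_ \<le> _ + real (card E) * ?err")
proof -
  define A where "A = M * cb M"
  define R where "R = (\<Sum>p\<in>{p\<in>P. heavy g p}. g p)"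
  define err1 where "err1 = \<eta>1 * A / kappa + \<eta>2 * K * A"
  define err2 where "err2 = \<eta>1 * A + R * K * cb M + \<eta>3 * L * A"
  have "potential f \<le> potential (reroute tight_path (heavy g) g)"
    by (rule wardrop_potential_le[OF f reroute_feasible[OF tight_path g]])
  then have "SC f \<le> (kappa * SC g + real (card E) * err2) / kappa + real (card E) * err1"
    using social_cost_le_potential[OF total f] potential_reroute_le[OF total g] kappa_bounds
    unfolding A_def R_def err1_def err2_def by (smt (verit) divide_right_mono)
  also have "\<dots> = SC g + real (card E) * (err2 / kappa + err1)"
    using kappa_bounds by (simp add: field_simps)
  finally have SC_f: "SC f \<le> SC g + real (card E) * (err2 / kappa + err1)" .
  have "0 \<le> ?err"
    using params kappa_bounds K_nonneg M_pos cb_M_pos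
    by (intro add_nonneg_nonneg divide_nonneg_nonneg mult_nonneg_nonneg) auto
  show ?thesis
  proof (cases "SC f \<le> SC g")
    case True then show ?thesis using \<open>0 \<le> ?err\<close> by (simp add: add_increasing2)
  next
    case False
    have "R * (L * cb M) \<le> SC g"
      unfolding R_def heavy_def using heavy_paths_flow_le[OF g] params cb_M_pos by simp
    also have "\<dots> \<le> K * A" using False wardrop_social_cost_le[OF total f] by (simp add: A_def)
    finally have "K * (R * (L * cb M)) \<le> K * (K * A)" using K_nonneg by (intro mult_left_mono)
    then have "R * K * cb M \<le> K * K * A / L" using params by (simp add: pos_le_divide_eq algebra_simps)
    then have "err2 / kappa + err1 \<le> ?err"
      using kappa_bounds by (simp add: err1_def err2_def A_def divide_right_mono)
    then show ?thesis using SC_f by (smt (verit) mult_left_mono of_nat_0_le_iff)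
  qed
qed

end

lemma error_bound_le:
  fixes n n1 K K1 \<kappa> \<theta> A L \<eta>1 \<eta>2 \<eta>3 :: real
  assumes n: "0 \<le> n" and K: "0 \<le> K" and \<kappa>: "0 < \<kappa>" and \<theta>: "0 < \<theta>" and A: "0 < A"
    and n1: "n1 = n + 1" and K1: "K1 = K + 1"
    and L_def: "L = 4 * n1 * K1^2 / (\<kappa> * \<theta>)"
    and \<eta>1_def: "\<eta>1 = \<theta> * \<kappa> / (12 * n1)"
    and \<eta>2_def: "\<eta>2 = \<theta> / (4 * n1 * K1)"
    and \<eta>3_def: "\<eta>3 = \<theta> * \<kappa> / (4 * n1 * L)"
  shows "n * ((\<eta>1 * A + K * K * A / L + \<eta>3 * L * A) / \<kappa> + \<eta>1 * A / \<kappa> + \<eta>2 * K * A) \<le> \<theta> * A"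
proof -
  have n1_pos: "0 < n1" and K1_pos: "0 < K1" using n1 n K1 K by auto
  define q where "q = n * \<theta> / n1"
  have q: "0 \<le> q" "q \<le> \<theta>" using n \<theta> n1_pos n1 by (auto simp: q_def divide_le_eq)
  have L: "L > 0" using n1_pos K1_pos \<kappa> \<theta> by (simp add: L_def)
  have e1: "n * \<eta>1 / \<kappa> = q / 12" using n1_pos \<kappa> by (simp add: \<eta>1_def q_def field_simps)
  have e2: "n * (K * K / (L * \<kappa>)) = q * (K * K / (K1 * K1)) / 4"
    using n1_pos K1_pos \<kappa> \<theta> by (simp add: L_def q_def field_simps power2_eq_square)
  have e3: "n * (\<eta>3 * L / \<kappa>) = q / 4" using n1_pos \<kappa> L by (simp add: \<eta>3_def q_def field_simps)
  have e4: "n * (\<eta>2 * K) = q * (K / K1) / 4" using n1_pos K1_pos by (simp add: \<eta>2_def q_def field_simps)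
  have "K * K / (K1 * K1) \<le> 1" "K / K1 \<le> 1" using K K1 by (simp_all add: divide_le_eq mult_mono)
  then have "q * (K * K / (K1 * K1)) / 4 \<le> q / 4" "q * (K / K1) / 4 \<le> q / 4"
    using mult_left_le[OF _ q(1)] by (simp_all only: divide_right_mono zero_le_numeral)
  then have "2 * (n * \<eta>1 / \<kappa>) + n * (K * K / (L * \<kappa>)) + n * (\<eta>3 * L / \<kappa>) + n * (\<eta>2 * K) \<le> q"
    unfolding e1 e2 e3 e4 using q(1) by linarith
  moreover have "n * ((\<eta>1 * A + K * K * A / L + \<eta>3 * L * A) / \<kappa> + \<eta>1 * A / \<kappa> + \<eta>2 * K * A)
      = A * (2 * (n * \<eta>1 / \<kappa>) + n * (K * K / (L * \<kappa>)) + n * (\<eta>3 * L / \<kappa>) + n * (\<eta>2 * K))"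
    using \<kappa> L by (simp add: field_simps)
  ultimately show ?thesis using q(2) A by (simp add: mult_le_cancel_left_pos mult.commute)
qed

context tight_routing
begin

lemma eventually_tight_routing_scale:
  assumes pos: "0 < \<eta>1" "0 < \<eta>2" "0 < \<eta>3" "0 < L"
  shows "\<forall>\<^sub>F M in F. tight_routing_scale E I P od pe c F cb M \<eta>1 \<eta>2 \<eta>3 L"
proof -
  have "\<forall>\<^sub>F M in F. \<forall>e\<in>fin_edges. c e M \<le> (alpha_real e + 1) * cb M"
    using finite_fin_edges fin_edge_tendsto(1) by (auto intro!: eventually_ball_finite eventually_cost_le)
  moreover have "\<forall>\<^sub>F M in F. \<forall>e\<in>fin_edges. alpha_real e > 0 \<longrightarrow>
      (\<forall>z. 0 \<le> z \<and> z \<le> M \<longrightarrow> \<bar>beckmann e z - kappa * z * c e z\<bar> \<le> \<eta>1 * M * cb M)"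
    using finite_fin_edges fin_edge_tendsto(1) pos(1) cost_mono_on cost_nonneg
    by (intro eventually_ball_finite ballI)
       (auto simp: beckmann_def fin_edges_def intro!: integral_approx_kappa)
  moreover have "\<forall>\<^sub>F M in F. \<forall>e\<in>fin_edges. alpha_real e = 0 \<longrightarrow> c e M \<le> \<eta>1 * cb M"
    using finite_fin_edges fin_edge_tendsto(1) pos(1)
    by (intro eventually_ball_finite ballI) (auto intro!: eventually_cost_le)
  moreover have "\<forall>\<^sub>F M in F. \<forall>e\<in>inf_edges. c e (M * \<eta>2) > K * cb M"
    using finite_inf_edges pos(2)
    by (intro eventually_ball_finite ballI eventually_cost_large inf_edge_unbounded)
  moreover have "\<forall>\<^sub>F M in F. \<forall>e\<in>inf_edges. c e (M * \<eta>3) > L * cb M"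
    using finite_inf_edges pos(3)
    by (intro eventually_ball_finite ballI eventually_cost_large inf_edge_unbounded)
  ultimately show ?thesis
    using eventually_pos by eventually_elim (unfold_locales, use pos in auto)
qed

lemma wardrop_social_cost_upper_bound:
  assumes \<theta>: "\<theta> > 0"
  shows "\<forall>\<^sub>F M in F. \<forall>m f g. (\<Sum>i\<in>I. m i) = M \<longrightarrow> wardrop m f \<longrightarrow> feas m g
    \<longrightarrow> SC f \<le> SC g + \<theta> * (M * cb M)"
proof -
  define n where "n = real (card E)"
  define L where "L = 4 * (n + 1) * (K + 1)^2 / (kappa * \<theta>)"
  define \<eta>1 where "\<eta>1 = \<theta> * kappa / (12 * (n + 1))"
  define \<eta>2 where "\<eta>2 = \<theta> / (4 * (n + 1) * (K + 1))"
  define \<eta>3 where "\<eta>3 = \<theta> * kappa / (4 * (n + 1) * L)"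
  have "0 < n + 1" "0 < K + 1" using K_nonneg by (auto simp: n_def)
  then have "0 < \<eta>1" "0 < \<eta>2" "0 < \<eta>3" "0 < L"
    using kappa_pos \<theta> by (auto simp: L_def \<eta>1_def \<eta>2_def \<eta>3_def)
  from eventually_tight_routing_scale[OF this] show ?thesis
  proof eventually_elim
    case (elim M)
    interpret tight_routing_scale E I P od pe c F cb M \<eta>1 \<eta>2 \<eta>3 L by (rule elim)
    show ?case
    proof (intro allI impI)
      fix m f g assume "(\<Sum>i\<in>I. m i) = M" "wardrop m f" "feas m g"
      moreover have "M * cb M > 0" using cb_M_pos M_pos by simp
      ultimately show "SC f \<le> SC g + \<theta> * (M * cb M)"
        using wardrop_social_cost_bound
          error_bound_le[OF _ K_nonneg kappa_pos \<theta> _ refl refl L_def \<eta>1_def \<eta>2_def \<eta>3_def, of "M * cb M"]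
        by (fastforce simp: n_def)
    qed
  qed
qed

lemma PoA_tendsto_one:
  assumes I: "I \<noteq> {}" and m: "\<And>n i. i \<in> I \<Longrightarrow> 0 \<le> m n i"
    and lim: "filterlim (\<lambda>n. \<Sum>i\<in>I. m n i) F sequentially"
  shows "(\<lambda>n. PoA E I P od pe c (m n)) \<longlonglongrightarrow> 1"
proof (rule tendstoI)
  fix \<epsilon> :: real assume \<epsilon>: "\<epsilon> > 0"
  obtain \<delta> where \<delta>: "\<delta> > 0"
    and lower: "\<forall>\<^sub>F M in F. \<forall>m g. (\<Sum>i\<in>I. m i) = M \<longrightarrow> feas m g \<longrightarrow> \<delta> * (M * cb M) \<le> SC g"
    using social_cost_lower_bound[OF I] by auto
  have "\<epsilon> * \<delta> / 2 > 0" using \<epsilon> \<delta> by simp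
  from eventually_compose_filterlim[OF _ lim,
      OF eventually_conj[OF lower wardrop_social_cost_upper_bound[OF this]]]
    eventually_compose_filterlim[OF eventually_pos lim]
  show "\<forall>\<^sub>F n in sequentially. dist (PoA E I P od pe c (m n)) 1 < \<epsilon>"
  proof eventually_elim
    case (elim n)
    define M where "M = (\<Sum>i\<in>I. m n i)"
    have "\<bar>PoA E I P od pe c (m n) - 1\<bar> \<le> \<epsilon> * \<delta> / 2 / \<delta>"
      by (rule PoA_close_to_one[where A = "M * cb M"])
         (use elim m \<delta> benchmark_pos[of M] in \<open>auto simp: M_def\<close>)
    then show ?case using \<epsilon> \<delta> by (simp add: dist_real_def)
  qed
qed

end

section \<open>The limits \<open>\<omega> = 0\<close> and \<open>\<omega> = \<infinity>\<close>\<close>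

lemma eventually_at_right_0_pos: "\<forall>\<^sub>F x in at_right (0::real). x > 0"
  by (simp add: eventually_at_right_field) (rule exI[of _ 1], simp)

context
  fixes \<omega> :: ereal
  assumes omega: "\<omega> = 0 \<or> \<omega> = \<infinity>"
begin

lemma omega_filter_cases: "omega_filter \<omega> = at_right 0 \<or> omega_filter \<omega> = at_top"
  using omega by (auto simp: omega_filter_def)

lemma omega_filter_scale: "s > 0 \<Longrightarrow> filterlim (\<lambda>x. x * s) (omega_filter \<omega>) (omega_filter \<omega>)"
  using omega_filter_cases
proof (elim disjE)
  assume s: "s > 0" and F: "omega_filter \<omega> = at_right 0"
  have "((\<lambda>x::real. x * s) \<longlongrightarrow> 0) (at_right 0)"
    using tendsto_mult[OF tendsto_ident_at[of 0 "{0<..}"] tendsto_const[of s]] by simp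
  moreover have "\<forall>\<^sub>F x in at_right (0::real). x * s > 0"
    using eventually_at_right_0_pos by eventually_elim (use s in auto)
  ultimately show ?thesis using F by (simp add: tendsto_imp_filterlim_at_right)
next
  assume "s > 0" "omega_filter \<omega> = at_top"
  then show ?thesis
    by (simp add: filterlim_at_top_mult_tendsto_pos[OF tendsto_const _ filterlim_ident])
qed

lemma omega_filter_interval:
  assumes G: "eventually G (omega_filter \<omega>)" and \<eta>: "0 < \<eta>" "\<eta> \<le> 1"
  shows "\<forall>\<^sub>F M in omega_filter \<omega>. \<forall>z. \<eta> * M \<le> z \<and> z \<le> M \<longrightarrow> G z"
  using omega_filter_cases
proof (elim disjE)
  assume F: "omega_filter \<omega> = at_right 0"
  then obtain b where b: "b > 0" "\<And>y. y > 0 \<Longrightarrow> y < b \<Longrightarrow> G y"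
    using G by (auto simp: eventually_at_right_field)
  have "\<forall>\<^sub>F M in at_right (0::real). M < b"
    using b(1) by (auto simp: eventually_at_right_field)
  with eventually_at_right_0_pos have "\<forall>\<^sub>F M in at_right 0. \<forall>z. \<eta> * M \<le> z \<and> z \<le> M \<longrightarrow> G z"
  proof eventually_elim
    case (elim M)
    show ?case
    proof (intro allI impI)
      fix z assume z: "\<eta> * M \<le> z \<and> z \<le> M"
      have "0 < \<eta> * M" using \<eta> elim by simp
      then show "G z" using b z elim by auto
    qed
  qed
  then show ?thesis using F by simp
next
  assume F: "omega_filter \<omega> = at_top"
  then obtain N where N: "\<And>y. y \<ge> N \<Longrightarrow> G y" using G by (auto simp: eventually_at_top_linorder)
  have "\<forall>\<^sub>F M in at_top. M \<ge> N / \<eta>" by simp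
  then have "\<forall>\<^sub>F M in at_top. \<forall>z. \<eta> * M \<le> z \<and> z \<le> M \<longrightarrow> G z"
  proof eventually_elim
    case (elim M)
    then have "N \<le> \<eta> * M" using \<eta> by (simp add: divide_le_eq mult.commute)
    then show ?case using N by auto
  qed
  then show ?thesis using F by simp
qed

lemma filterlim_inflow:
  assumes pos: "\<And>n. M n > 0" and lim: "((\<lambda>n. ereal (M n)) \<longlongrightarrow> \<omega>) sequentially"
  shows "filterlim M (omega_filter \<omega>) sequentially"
  using omega
proof (elim disjE)
  assume "\<omega> = 0"
  then have "(M \<longlongrightarrow> 0) sequentially" using lim by (simp add: zero_ereal_def lim_ereal)
  then show ?thesis using pos \<open>\<omega> = 0\<close> by (simp add: omega_filter_def tendsto_imp_filterlim_at_right)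
next
  assume "\<omega> = \<infinity>"
  then show ?thesis using lim by (simp add: omega_filter_def tendsto_PInfty_eq_at_top)
qed

end

lemma (in routing_net) tight_monotone_witness:
  assumes F: "F \<noteq> bot" and I: "I \<noteq> {}"
    and lims: "\<And>e. e \<in> E \<Longrightarrow> \<exists>a::ereal. ((\<lambda>x. ereal (c e x / cb x)) \<longlongrightarrow> a) F"
    and tight: "\<And>i. i \<in> I \<Longrightarrow>
      0 < (INF p\<in>{p\<in>P. od p = i}. SUP e\<in>set (pe p). ratio_limit F c cb e) \<and>
      (INF p\<in>{p\<in>P. od p = i}. SUP e\<in>set (pe p). ratio_limit F c cb e) < \<infinity>"
  shows "\<exists>ce a. a > 0 \<and> mono_on {0..} ce \<and> ((\<lambda>x. ce x / cb x) \<longlongrightarrow> a) F"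
proof -
  obtain i where i: "i \<in> I" using I by auto
  then have "\<exists>p\<in>{p\<in>P. od p = i}. (SUP e\<in>set (pe p). ratio_limit F c cb e) < \<infinity>"
    using tight[OF i] by (simp only: INF_less_iff)
  then obtain p where p: "p \<in> P" "od p = i" "(SUP e\<in>set (pe p). ratio_limit F c cb e) < \<infinity>"
    by blast
  have "0 < (SUP e\<in>set (pe p). ratio_limit F c cb e)"
    using tight[OF i] INF_lower[of p "{p\<in>P. od p = i}"] p by (fastforce dest: less_le_trans)
  then obtain e where e: "e \<in> set (pe p)" "0 < ratio_limit F c cb e" by (auto simp: less_SUP_iff)
  have e_fin: "ratio_limit F c cb e < \<infinity>" using le_less_trans[OF SUP_upper[OF e(1)] p(3)] .
  have "e \<in> E" using path_edges p e by auto
  then obtain a :: ereal where a: "((\<lambda>x. ereal (c e x / cb x)) \<longlongrightarrow> a) F" using lims by blast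
  have "ratio_limit F c cb e = a"
    unfolding ratio_limit_def using a tendsto_Lim F by blast
  then obtain r where "a = ereal r" "r > 0" using e(2) e_fin by (cases a) auto
  then show ?thesis
    using a cost_mono_on[OF \<open>e \<in> E\<close>] by (intro exI[of _ "c e"] exI[of _ r]) (simp add: lim_ereal)
qed

lemma tight_routing_omega:
  assumes net: "routing_network E src tgt I orig dest P od pe c" and I: "I \<noteq> {}"
    and omega: "\<omega> = 0 \<or> \<omega> = \<infinity>" and bench: "benchmark \<omega> E c cb"
    and tight: "\<And>i. i \<in> I \<Longrightarrow> 0 < alpha_od \<omega> P od pe c cb i \<and> alpha_od \<omega> P od pe c cb i < \<infinity>"
  shows "tight_routing E I P od pe c (omega_filter \<omega>) cb"
proof -
  let ?F = "omega_filter \<omega>"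
  interpret routing_net E I P od pe c
    using net unfolding routing_network_def routing_net_def by auto
  have lims: "\<forall>e\<in>E. \<exists>a::ereal. a \<ge> 0 \<and> ((\<lambda>x. ereal (c e x / cb x)) \<longlongrightarrow> a) ?F"
    and rv: "regularly_varying \<omega> cb"
    using bench by (auto simp: benchmark_def)
  have tight': "0 < (INF p\<in>{p\<in>P. od p = i}. SUP e\<in>set (pe p). ratio_limit ?F c cb e) \<and>
      (INF p\<in>{p\<in>P. od p = i}. SUP e\<in>set (pe p). ratio_limit ?F c cb e) < \<infinity>" if "i \<in> I" for i
    using tight[OF that] by (simp add: alpha_od_def alpha_edge_def ratio_limit_def)
  have "?F \<noteq> bot" using omega_filter_cases[OF omega] by auto
  moreover have "\<forall>\<^sub>F x in ?F. x > 0"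
    using omega_filter_cases[OF omega] eventually_at_right_0_pos by auto
  moreover have "\<exists>ce a. a > 0 \<and> mono_on {0..} ce \<and> ((\<lambda>x. ce x / cb x) \<longlongrightarrow> a) ?F"
    using lims by (intro tight_monotone_witness[OF \<open>?F \<noteq> bot\<close> I _ tight']) auto
  ultimately show ?thesis
    using rv lims tight' omega_filter_scale[OF omega] omega_filter_interval[OF omega]
    by unfold_locales (auto simp: regularly_varying_def)
qed

theorem corollary6p3:
  fixes E :: "'e set" and src tgt :: "'e \<Rightarrow> 'v"
    and I :: "'i set" and orig dest :: "'i \<Rightarrow> 'v"
    and P :: "'p set" and od :: "'p \<Rightarrow> 'i" and pe :: "'p \<Rightarrow> 'e list"
    and c :: "'e \<Rightarrow> real \<Rightarrow> real"
    and m :: "nat \<Rightarrow> 'i \<Rightarrow> real"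
    and \<omega> :: ereal and cb :: "real \<Rightarrow> real"
  assumes net: "routing_network E src tgt I orig dest P od pe c"
    and dem_nonneg: "\<And>n i. i \<in> I \<Longrightarrow> m n i \<ge> 0"
    and inflow_pos: "\<And>n. (\<Sum>i\<in>I. m n i) > 0"
    and omega: "\<omega> = 0 \<or> \<omega> = \<infinity>"
    and inflow_lim: "((\<lambda>n. ereal (\<Sum>i\<in>I. m n i)) \<longlongrightarrow> \<omega>) sequentially"
    and bench: "benchmark \<omega> E c cb"
    and tight: "\<And>i. i \<in> I \<Longrightarrow> 0 < alpha_od \<omega> P od pe c cb i \<and> alpha_od \<omega> P od pe c cb i < \<infinity>"
  shows "(\<lambda>n. PoA E I P od pe c (m n)) \<longlonglongrightarrow> 1"
proof -
  have I: "I \<noteq> {}" using inflow_pos[of 0] by auto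
  interpret tight_routing E I P od pe c "omega_filter \<omega>" cb
    by (rule tight_routing_omega[OF net I omega bench tight])
  show ?thesis
    by (rule PoA_tendsto_one[OF I dem_nonneg filterlim_inflow[OF omega inflow_pos inflow_lim]])
qed

end
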